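(* Fix $d\ge3$ and let $R,\delta,c_p>1$. Let $\mathsf T\subset S^{d-1}$ be a closed subset with $\max_{\mathsf x,\mathsf y\in\mathsf T}\|\mathsf x-\mathsf y\|_2\le c_p/R$, and let $\mathsf C=\{\mathsf x\in\mathbb R^d: R\le\|\mathsf x\|_2\le R+\delta\sqrt{\log R},\ \mathsf x/\|\mathsf x\|_2\in\mathsf T\}$, with discrete cell $\mathcal C=\mathsf C\cap\mathbb Z^d$. Let $Y$ be simple random walk on $\mathbb Z^d$ started at $\mathbf 0$. Then there exist finite constants $R_1=R_1(d)$ and $C'=C'(d,\delta,c_p)$ such that for all $R>R_1$, $$\mathbb P_{\mathbf 0}\big(Y\text{ hits }\mathcal C\text{ before hitting }\mathbb Z^d\setminus\mathcal B_{R+\delta\sqrt{\log R}}\big)\le C'\,\frac{\log R}{R^{d-1}}.$$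
   Context: $S^{d-1}=\{\mathsf x\in\mathbb R^d:\|\mathsf x\|_2=1\}$. For $\rho>0$, $\mathcal B_\rho=\{x\in\mathbb Z^d:\|x\|_2<\rho\}$ (intersection of the open Euclidean ball with $\mathbb Z^d$). $\mathbb P_{\mathbf 0}$ is the law of simple random walk $Y$ on $\mathbb Z^d$ with $Y_0=\mathbf 0$. *)

theory Defs
  imports "HOL-Analysis.Analysis" "HOL-Probability.Probability"
begin

definition srw_steps :: "(int^'n) set" where
  "srw_steps = {v. \<exists>i. v = axis i 1 \<or> v = axis i (-1)}"

definition srw_space :: "(int^'n) stream measure" where
  "srw_space = stream_space (measure_pmf (pmf_of_set srw_steps))"

definition srw_pos :: "(int^'n) stream \<Rightarrow> nat \<Rightarrow> int^'n" where
  "srw_pos \<omega> n = (\<Sum>k<n. \<omega> !! k)"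

definition lat :: "int^'n \<Rightarrow> real^'n" where
  "lat x = (\<chi> i. of_int (x $ i))"

definition srw_hit_before :: "(int^'n) set \<Rightarrow> (int^'n) set \<Rightarrow> real" where
  "srw_hit_before A B = measure srw_space
     {\<omega> \<in> space srw_space. \<exists>n. srw_pos \<omega> n \<in> A \<and> (\<forall>m<n. srw_pos \<omega> m \<notin> B)}"

end

theory Submission
  imports Defs
begin

(*
  The cell has O(sqrt (log R)) lattice points, and each of them is hit before the walk leaves the
  ball of radius rho = R + delta sqrt (log R) with probability O(sqrt (log R) / R^(d-1)): a point z
  at distance t from the sphere of radius rho + 1 is hit with probability O(t / rho^(d-1)).

  The single-point bound comes from a comparison principle for finite-horizon hitting probabilities
  with nonnegative discrete superharmonic functions, applied twice. The Green-type function
  (|u|^2 + b)^(-(d-2)/2) bounds the probability of hitting z from distance about t by O(t^(2-d)).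
  The Poisson-kernel-type function (c - |u|^2) (|u - w|^2 + b)^(-d/2), with c = (rho+1)^2 and its
  pole w on the ray through z just outside the ball, is O(t / rho^(d-1)) at the origin, while a
  multiple of it dominates the Green-type bound where the walk first comes within distance t/2
  of z. Superharmonicity of both functions follows from a fourth-order Taylor expansion of
  s^(-k); the constant b is chosen to absorb the error terms.
*)

section \<open>The walk and its finite-horizon hitting probabilities\<close>

lemma srw_steps_eq: "srw_steps = range (\<lambda>i. axis i 1) \<union> range (\<lambda>i. axis i (-1))"
  unfolding srw_steps_def by auto

lemma finite_srw_steps [simp]: "finite (srw_steps :: (int^'n::finite) set)"
  unfolding srw_steps_eq by simp

lemma card_srw_steps: "card (srw_steps :: (int^'n::finite) set) = 2 * CARD('n)"
proof -
  have "card (srw_steps :: (int^'n) set)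
      = card (range (\<lambda>i::'n. axis i (1::int))) + card (range (\<lambda>i::'n. axis i (-1::int)))"
    unfolding srw_steps_eq
    by (rule card_Un_disjoint) (auto simp: axis_eq_axis)
  also have "\<dots> = 2 * CARD('n)"
    by (simp add: card_image inj_on_def axis_eq_axis)
  finally show ?thesis .
qed

lemma card_srw_steps_pos [simp]: "0 < card (srw_steps :: (int^'n::finite) set)"
  by (simp add: card_srw_steps)

lemma srw_steps_nonempty [simp]: "(srw_steps :: (int^'n::finite) set) \<noteq> {}"
  unfolding srw_steps_eq by simp

lemma lat_add: "lat (x + y) = lat x + lat y"
  unfolding lat_def by (simp add: vec_eq_iff)

lemma lat_0 [simp]: "lat 0 = 0"
  unfolding lat_def by (simp add: vec_eq_iff)

lemma lat_nth: "lat z $ i = real_of_int (z $ i)"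
  unfolding lat_def by simp

lemma lat_axis: "lat (axis i a) = axis i (of_int a)"
  unfolding lat_def by (simp add: vec_eq_iff axis_def)

lemma axis_uminus: "axis i (- a) = - axis i (a::'a::ab_group_add)"
  by (simp add: axis_def vec_eq_iff)

lemma norm_lat_srw_step: "e \<in> srw_steps \<Longrightarrow> norm (lat e) = 1"
  unfolding srw_steps_def by (auto simp: lat_axis) (simp add: axis_uminus)

lemma sum_srw_steps:
  "(\<Sum>e\<in>srw_steps. f (lat (x + e))) = (\<Sum>i\<in>UNIV. f (lat x + axis i 1) + f (lat x - axis i 1))"
proof -
  have "(\<Sum>e\<in>srw_steps. f (lat (x + e)))
      = (\<Sum>e\<in>range (\<lambda>i. axis i 1). f (lat (x + e))) + (\<Sum>e\<in>range (\<lambda>i. axis i (-1)). f (lat (x + e)))"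
    unfolding srw_steps_eq
    by (rule sum.union_disjoint) (auto simp: axis_eq_axis)
  also have "\<dots> = (\<Sum>i\<in>UNIV. f (lat x + axis i 1)) + (\<Sum>i\<in>UNIV. f (lat x + axis i (-1)))"
    by (simp add: sum.reindex inj_on_def axis_eq_axis lat_add lat_axis)
  also have "\<dots> = (\<Sum>i\<in>UNIV. f (lat x + axis i 1) + f (lat x - axis i 1))"
    by (simp add: sum.distrib axis_uminus)
  finally show ?thesis .
qed

lemma space_srw_space [simp]: "space srw_space = UNIV"
  unfolding srw_space_def by (simp add: space_stream_space)

lemma prob_space_srw_space: "prob_space (srw_space :: (int^'n::finite) stream measure)"
  unfolding srw_space_def by (rule prob_space.prob_space_stream_space) (rule prob_space_measure_pmf)

lemma srw_pos_0 [simp]: "srw_pos \<omega> 0 = 0"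
  by (simp add: srw_pos_def)

lemma srw_pos_Suc: "srw_pos \<omega> (Suc n) = srw_pos \<omega> n + \<omega> !! n"
  by (simp add: srw_pos_def)

lemma srw_pos_Suc_stl: "srw_pos \<omega> (Suc n) = shd \<omega> + srw_pos (stl \<omega>) n"
  unfolding srw_pos_def sum.lessThan_Suc_shift by simp

lemma measurable_srw_pos:
  "(\<lambda>\<omega>. srw_pos \<omega> n) \<in> measurable (srw_space :: (int^'n::finite) stream measure) (count_space UNIV)"
proof (induction n)
  case (Suc n)
  have step: "(\<lambda>\<omega>. \<omega> !! n) \<in> measurable (srw_space :: (int^'n) stream measure) (count_space UNIV)"
    using measurable_snth[of n "measure_pmf (pmf_of_set srw_steps)"]
    unfolding srw_space_def by (simp cong: measurable_cong_sets)
  have "(\<lambda>\<omega>. (\<lambda>v \<omega>. v + \<omega> !! n) (srw_pos \<omega> n) \<omega>)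
      \<in> measurable (srw_space :: (int^'n) stream measure) (count_space UNIV)"
    by (rule measurable_compose_countable[OF _ Suc])
       (use measurable_compose[OF step, of "(+) _" "count_space UNIV"] in simp)
  then show ?case by (simp add: srw_pos_Suc)
qed simp

lemma measurable_pred_srw_pos [measurable]:
  "Measurable.pred (srw_space :: (int^'n::finite) stream measure) (\<lambda>\<omega>. P (srw_pos \<omega> n))"
  using measurable_compose[OF measurable_srw_pos[of n], of P "count_space UNIV"] by simp

definition srw_hits_within :: "(int^'n) set \<Rightarrow> (int^'n) set \<Rightarrow> nat \<Rightarrow> int^'n \<Rightarrow> (int^'n) stream set" where
  "srw_hits_within A B N x =
     {\<omega> \<in> space srw_space. \<exists>n<N. x + srw_pos \<omega> n \<in> A \<and> (\<forall>m<n. x + srw_pos \<omega> m \<notin> B)}"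

fun hit_prob :: "(int^'n::finite) set \<Rightarrow> (int^'n) set \<Rightarrow> nat \<Rightarrow> int^'n \<Rightarrow> real" where
  "hit_prob A B 0 x = 0"
| "hit_prob A B (Suc N) x =
     (if x \<in> A then 1 else if x \<in> B then 0
      else (\<Sum>e\<in>srw_steps. hit_prob A B N (x + e)) / card (srw_steps :: (int^'n) set))"

lemma hit_prob_nonneg: "0 \<le> hit_prob A B N x"
  by (induction N arbitrary: x) (auto intro!: sum_nonneg divide_nonneg_nonneg)

lemma hit_prob_le_1:
  fixes x :: "int^'n::finite"
  shows "hit_prob A B N x \<le> 1"
proof (induction N arbitrary: x)
  case (Suc N)
  have "(\<Sum>e\<in>srw_steps. hit_prob A B N (x + e)) \<le> card (srw_steps :: (int^'n) set)"
    using sum_mono[of srw_steps "\<lambda>e. hit_prob A B N (x + e)" "\<lambda>_. 1"] Suc by simp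
  then show ?case by simp
qed simp

lemma sets_srw_hits_within [measurable]:
  "srw_hits_within A B N x \<in> sets (srw_space :: (int^'n::finite) stream measure)"
  unfolding srw_hits_within_def by measurable

lemma srw_hits_within_Suc:
  "srw_hits_within A B (Suc N) x =
     {\<omega>. x \<in> A \<or> (x \<notin> B \<and> stl \<omega> \<in> srw_hits_within A B N (x + shd \<omega>))}"
  unfolding srw_hits_within_def Ex_less_Suc2 All_less_Suc2
  by (auto simp: srw_pos_Suc_stl add.assoc)

lemma measure_srw_hits_within:
  "measure (srw_space :: (int^'n::finite) stream measure) (srw_hits_within A B N x) = hit_prob A B N x"
proof (induction N arbitrary: x)
  case 0
  show ?case by (simp add: srw_hits_within_def)
next
  case (Suc N)
  interpret prob_space "srw_space :: (int^'n) stream measure"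
    by (rule prob_space_srw_space)
  consider "x \<in> A" | "x \<notin> A" "x \<in> B" | "x \<notin> A" "x \<notin> B" by blast
  then show ?case
  proof cases
    case 3
    let ?P = "measure_pmf (pmf_of_set (srw_steps :: (int^'n) set))"
    have "emeasure srw_space (srw_hits_within A B (Suc N) x)
        = (\<integral>\<^sup>+e. emeasure srw_space {\<omega> \<in> space srw_space. e ## \<omega> \<in> srw_hits_within A B (Suc N) x} \<partial>?P)"
      unfolding srw_space_def
      by (rule prob_space.emeasure_stream_space[OF prob_space_measure_pmf])
         (rule sets_srw_hits_within[unfolded srw_space_def])
    also have "\<dots> = (\<integral>\<^sup>+e. ennreal (hit_prob A B N (x + e)) \<partial>?P)"
      using 3 Suc.IH by (simp add: srw_hits_within_Suc emeasure_eq_measure)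
    also have "\<dots> = (\<Sum>e\<in>srw_steps. ennreal (hit_prob A B N (x + e))) / card (srw_steps :: (int^'n) set)"
      by (rule nn_integral_pmf_of_set) simp_all
    also have "\<dots> = ennreal (hit_prob A B (Suc N) x)"
      using 3 by (simp add: sum_ennreal hit_prob_nonneg divide_ennreal ennreal_of_nat_eq_real_of_nat sum_nonneg)
    finally show ?thesis
      using hit_prob_nonneg[of A B "Suc N" x] by (simp add: emeasure_eq_measure del: hit_prob.simps)
  qed (use prob_space in \<open>simp_all add: srw_hits_within_Suc\<close>)
qed

lemma srw_hit_before_le:
  assumes "\<And>N. hit_prob A B N 0 \<le> c"
  shows "srw_hit_before A (B :: (int^'n::finite) set) \<le> c"
proof -
  interpret prob_space "srw_space :: (int^'n) stream measure"
    by (rule prob_space_srw_space)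
  have "(\<lambda>N. measure srw_space (srw_hits_within A B N 0))
      \<longlonglongrightarrow> measure srw_space (\<Union>N. srw_hits_within A B N (0::int^'n))"
  proof (rule finite_Lim_measure_incseq)
    show "range (\<lambda>N. srw_hits_within A B N 0) \<subseteq> events"
      using sets_srw_hits_within by blast
    show "incseq (\<lambda>N. srw_hits_within A B N (0::int^'n))"
      by (auto simp: incseq_def srw_hits_within_def dest: less_le_trans)
  qed
  then have "measure srw_space (\<Union>N. srw_hits_within A B N (0::int^'n)) \<le> c"
    by (rule LIMSEQ_le_const2) (simp add: measure_srw_hits_within assms)
  moreover have "(\<Union>N. srw_hits_within A B N 0)
      = {\<omega> \<in> space srw_space. \<exists>n. srw_pos \<omega> n \<in> A \<and> (\<forall>m<n. srw_pos \<omega> m \<notin> B)}"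
    unfolding srw_hits_within_def by auto
  ultimately show ?thesis
    unfolding srw_hit_before_def by simp
qed

lemma srw_hit_before_le_1: "srw_hit_before A (B :: (int^'n::finite) set) \<le> 1"
  unfolding srw_hit_before_def using prob_space.prob_le_1[OF prob_space_srw_space] by simp

lemma hit_prob_le_superharmonic:
  fixes h :: "int^'n::finite \<Rightarrow> real"
  assumes nonneg: "\<And>y. 0 \<le> h y"
    and superharmonic: "\<And>y. y \<notin> S \<Longrightarrow> y \<notin> B \<Longrightarrow>
          (\<Sum>e\<in>srw_steps. h (y + e)) \<le> card (srw_steps :: (int^'n) set) * h y"
    and entrance: "\<And>y e M. y \<notin> S \<Longrightarrow> y \<notin> B \<Longrightarrow> e \<in> srw_steps \<Longrightarrow> y + e \<in> S \<Longrightarrow>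
          hit_prob A B M (y + e) \<le> h (y + e)"
    and "A \<subseteq> S" and "x \<notin> S"
  shows "hit_prob A B N x \<le> h x"
  using \<open>x \<notin> S\<close>
proof (induction N arbitrary: x)
  case (Suc N)
  show ?case
  proof (cases "x \<in> B")
    case False
    have "(\<Sum>e\<in>srw_steps. hit_prob A B N (x + e)) \<le> (\<Sum>e\<in>srw_steps. h (x + e))"
      by (rule sum_mono) (metis Suc False entrance)
    also have "\<dots> \<le> card (srw_steps :: (int^'n) set) * h x"
      using Suc.prems False by (rule superharmonic)
    finally show ?thesis
      using Suc.prems False \<open>A \<subseteq> S\<close> by (auto simp: divide_le_eq mult.commute)
  qed (use Suc.prems \<open>A \<subseteq> S\<close> nonneg in auto)
qed (simp add: nonneg)

lemma hit_prob_le_sum_singletons: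
  fixes A :: "(int^'n::finite) set"
  assumes "finite A"
  shows "hit_prob A B N x \<le> (\<Sum>z\<in>A. hit_prob {z} B N x)"
proof (induction N arbitrary: x)
  case (Suc N)
  consider "x \<in> A" | "x \<notin> A" "x \<in> B" | "x \<notin> A" "x \<notin> B" by blast
  then show ?case
  proof cases
    case 1
    then have "hit_prob {x} B (Suc N) x \<le> (\<Sum>z\<in>A. hit_prob {z} B (Suc N) x)"
      using assms by (intro member_le_sum hit_prob_nonneg)
    with 1 show ?thesis by simp
  next
    case 3
    have "(\<Sum>e\<in>srw_steps. hit_prob A B N (x + e)) \<le> (\<Sum>e\<in>srw_steps. \<Sum>z\<in>A. hit_prob {z} B N (x + e))"
      by (rule sum_mono) (rule Suc.IH)
    then have "hit_prob A B (Suc N) x \<le> (\<Sum>z\<in>A. \<Sum>e\<in>srw_steps. hit_prob {z} B N (x + e)) / card (srw_steps :: (int^'n) set)"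
      using 3 by (simp add: sum.swap[of _ srw_steps] divide_right_mono)
    also have "\<dots> = (\<Sum>z\<in>A. hit_prob {z} B (Suc N) x)"
      using 3 by (auto simp: sum_divide_distrib intro!: sum.cong)
    finally show ?thesis .
  qed (simp add: sum_nonneg hit_prob_nonneg)
qed simp

section \<open>Taylor estimates for negative powers\<close>

definition neg_powr_deriv :: "real \<Rightarrow> nat \<Rightarrow> real \<Rightarrow> real" where
  "neg_powr_deriv k m t = (\<Prod>j<m. - k - real j) * (1 + t) powr (- k - real m)"

lemma has_real_derivative_neg_powr_deriv:
  assumes "t > -1"
  shows "(neg_powr_deriv k m has_real_derivative neg_powr_deriv k (Suc m) t) (at t)"
proof -
  have "((\<lambda>t. (1 + t) powr (- k - real m)) has_real_derivative
      (- k - real m) * (1 + t) powr (- k - real m - 1)) (at t)"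
    using assms by (auto intro!: derivative_eq_intros)
  from DERIV_cmult[OF this, of "\<Prod>j<m. - k - real j"] show ?thesis
    unfolding neg_powr_deriv_def by (simp add: algebra_simps)
qed

lemma neg_powr_taylor:
  fixes k q :: real
  assumes "n > 0" "\<bar>q\<bar> \<le> 1/2"
  shows "\<exists>t. \<bar>t\<bar> \<le> 1/2 \<and> (1 + q) powr (-k) =
           (\<Sum>m<n. neg_powr_deriv k m 0 / fact m * q ^ m) + neg_powr_deriv k n t / fact n * q ^ n"
proof (cases "q = 0")
  case True
  then show ?thesis
    using \<open>n > 0\<close> by (intro exI[of _ 0]) (simp add: neg_powr_deriv_def zero_power)
next
  case False
  have "\<exists>t. (if q < 0 then q < t \<and> t < 0 else 0 < t \<and> t < q) \<and> neg_powr_deriv k 0 q =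
      (\<Sum>m<n. neg_powr_deriv k m 0 / fact m * (q - 0) ^ m) + neg_powr_deriv k n t / fact n * (q - 0) ^ n"
    by (rule Taylor[where diff = "neg_powr_deriv k" and a = "-1/2" and b = "1/2"])
       (use assms False in \<open>auto intro!: has_real_derivative_neg_powr_deriv\<close>)
  then obtain t where t: "if q < 0 then q < t \<and> t < 0 else 0 < t \<and> t < q"
    "neg_powr_deriv k 0 q =
       (\<Sum>m<n. neg_powr_deriv k m 0 / fact m * (q - 0) ^ m) + neg_powr_deriv k n t / fact n * (q - 0) ^ n"
    by blast
  have "\<bar>t\<bar> \<le> 1/2"
    using t(1) assms(2) by (auto split: if_splits)
  with t(2) show ?thesis
    by (auto simp: neg_powr_deriv_def)
qed

definition taylor4_const :: "real \<Rightarrow> real" where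
  "taylor4_const k = k * (k + 1) * (k + 2) * (k + 3) / 24 * 2 powr (k + 4)"

lemma taylor4_const_nonneg: "k > 0 \<Longrightarrow> 0 \<le> taylor4_const k"
  unfolding taylor4_const_def by simp

lemma neg_powr_taylor4:
  fixes k q :: real
  assumes "k > 0" "\<bar>q\<bar> \<le> 1/2"
  shows "\<bar>(1 + q) powr (-k) - (1 - k*q + k*(k+1)/2*q^2 - k*(k+1)*(k+2)/6*q^3)\<bar>
           \<le> taylor4_const k * q^4"
proof -
  obtain t where t: "\<bar>t\<bar> \<le> 1/2"
    "(1 + q) powr (-k) = (\<Sum>m<4. neg_powr_deriv k m 0 / fact m * q ^ m) + neg_powr_deriv k 4 t / fact 4 * q ^ 4"
    using neg_powr_taylor[of 4 q k] assms(2) by auto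
  have "(1 + t) powr (- k - 4) \<le> (1/2) powr (- k - 4)"
    using assms t(1) by (intro powr_mono2') auto
  also have "(1/2::real) powr (- k - 4) = 2 powr (k + 4)"
    using powr_minus_divide[of 2 "- k - 4"] by (simp add: powr_divide add.commute)
  moreover have "\<bar>\<Prod>j<4. - k - real j\<bar> = k*(k+1)*(k+2)*(k+3)"
    using assms(1) by (simp add: eval_nat_numeral algebra_simps)
  ultimately have "\<bar>neg_powr_deriv k 4 t\<bar> \<le> k*(k+1)*(k+2)*(k+3) * 2 powr (k + 4)"
    using assms(1) by (simp add: neg_powr_deriv_def abs_mult mult_left_mono)
  then have "\<bar>neg_powr_deriv k 4 t / fact 4 * q ^ 4\<bar> \<le> taylor4_const k * q^4"
    unfolding taylor4_const_def by (simp add: abs_mult fact_numeral mult_right_mono)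
  moreover have "(\<Sum>m<4. neg_powr_deriv k m 0 / fact m * q ^ m) = 1 - k*q + k*(k+1)/2*q^2 - k*(k+1)*(k+2)/6*q^3"
    by (simp add: eval_nat_numeral neg_powr_deriv_def fact_numeral algebra_simps divide_simps)
  ultimately show ?thesis
    using t(2) by simp
qed

lemma neg_powr_ge_tangent:
  fixes k q :: real
  assumes "k > 0" "\<bar>q\<bar> \<le> 1/2"
  shows "1 - k * q \<le> (1 + q) powr (-k)"
proof -
  obtain t where t: "\<bar>t\<bar> \<le> 1/2"
    "(1 + q) powr (-k) = (\<Sum>m<2. neg_powr_deriv k m 0 / fact m * q ^ m) + neg_powr_deriv k 2 t / fact 2 * q ^ 2"
    using neg_powr_taylor[of 2 q k] assms(2) by auto
  have "neg_powr_deriv k 2 t = k * (k + 1) * (1 + t) powr (- k - 2)"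
    by (simp add: neg_powr_deriv_def eval_nat_numeral algebra_simps)
  then have "0 \<le> neg_powr_deriv k 2 t / fact 2 * q ^ 2"
    using assms(1) by simp
  moreover have "(\<Sum>m<2. neg_powr_deriv k m 0 / fact m * q ^ m) = 1 - k * q"
    by (simp add: eval_nat_numeral neg_powr_deriv_def)
  ultimately show ?thesis
    using t(2) by linarith
qed

lemma neg_powr_even_part:
  fixes k q :: real
  assumes "k > 0" "\<bar>q\<bar> \<le> 1/2"
  shows "\<bar>(1 + q) powr (-k) + (1 - q) powr (-k) - (2 + k*(k+1)*q^2)\<bar> \<le> 2 * taylor4_const k * q^4"
  using neg_powr_taylor4[OF assms] neg_powr_taylor4[of k "-q"] assms
  by (simp add: abs_le_iff power2_eq_square power4_eq_xxxx)

lemma neg_powr_odd_part: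
  fixes k q :: real
  assumes "k > 0" "\<bar>q\<bar> \<le> 1/2"
  shows "\<bar>(1 + q) powr (-k) - (1 - q) powr (-k) + 2*k*q\<bar>
           \<le> k*(k+1)*(k+2)/3 * \<bar>q\<bar>^3 + 2 * taylor4_const k * q^4"
proof -
  have "\<bar>(1 + q) powr (-k) - (1 - q) powr (-k) + 2*k*q + k*(k+1)*(k+2)/3 * q^3\<bar> \<le> 2 * taylor4_const k * q^4"
    using neg_powr_taylor4[OF assms] neg_powr_taylor4[of k "-q"] assms
    by (simp add: abs_le_iff power2_eq_square power3_eq_cube power4_eq_xxxx)
  moreover have "\<bar>k*(k+1)*(k+2)/3 * q^3\<bar> = k*(k+1)*(k+2)/3 * \<bar>q\<bar>^3"
    using assms(1) by (simp add: abs_mult power_abs)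
  ultimately show ?thesis
    by linarith
qed

lemma power2_norm_vec: "norm (y::real^'n) ^ 2 = (\<Sum>i\<in>UNIV. (y$i)^2)"
  by (simp only: power2_norm_eq_inner) (simp add: inner_vec_def power2_eq_square)

lemma sum_power4_components_le: "(\<Sum>i\<in>UNIV. (y$i)^4) \<le> norm (y::real^'n) ^ 4"
proof -
  have "(\<Sum>i\<in>UNIV. (y$i)^4) \<le> (\<Sum>i\<in>UNIV. norm y ^ 2 * (y$i)^2)"
  proof (intro sum_mono)
    fix i
    have "(y$i)^2 \<le> norm y ^ 2"
      using power_mono[OF component_le_norm_cart[of y i], of 2] by simp
    then show "(y$i)^4 \<le> norm y ^ 2 * (y$i)^2"
      using mult_right_mono[OF _ zero_le_power2, of "(y$i)^2" "norm y ^ 2" "y$i"]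
      by (simp add: power_mult_distrib flip: power_add)
  qed
  also have "\<dots> = norm y ^ 2 * norm y ^ 2"
    by (simp add: power2_norm_vec sum_distrib_left)
  also have "\<dots> = norm y ^ 4"
    by (simp flip: power_add)
  finally show ?thesis .
qed

lemma sum_abs_cube_components_le: "(\<Sum>i\<in>UNIV. \<bar>y$i\<bar>^3) \<le> norm (y::real^'n) ^ 3"
proof -
  have "(\<Sum>i\<in>UNIV. \<bar>y$i\<bar>^3) \<le> (\<Sum>i\<in>UNIV. norm y * (y$i)^2)"
  proof (intro sum_mono)
    fix i
    have "\<bar>y$i\<bar> * (y$i)^2 \<le> norm y * (y$i)^2"
      by (simp add: mult_right_mono component_le_norm_cart)
    moreover have "\<bar>y$i\<bar>^3 = \<bar>y$i\<bar> * (y$i)^2"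
      by (simp add: power3_eq_cube power2_eq_square)
    ultimately show "\<bar>y$i\<bar>^3 \<le> norm y * (y$i)^2"
      by simp
  qed
  also have "\<dots> = norm y * norm y ^ 2"
    by (simp add: power2_norm_vec sum_distrib_left)
  also have "\<dots> = norm y ^ 3"
    by (simp add: power3_eq_cube power2_eq_square)
  finally show ?thesis .
qed

lemma sum_neg_powr_even_part:
  fixes q :: "real^'n" and k :: real
  assumes "k > 0" and q: "\<And>i. \<bar>q$i\<bar> \<le> 1/2"
  shows "\<bar>(\<Sum>i\<in>UNIV. (1 + q$i) powr (-k) + (1 - q$i) powr (-k)) - (2 * CARD('n) + k*(k+1) * norm q ^ 2)\<bar>
           \<le> 2 * taylor4_const k * norm q ^ 4"
proof -
  have "(\<Sum>i\<in>UNIV. (1 + q$i) powr (-k) + (1 - q$i) powr (-k)) - (2 * CARD('n) + k*(k+1) * norm q ^ 2)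
      = (\<Sum>i\<in>UNIV. (1 + q$i) powr (-k) + (1 - q$i) powr (-k) - (2 + k*(k+1) * (q$i)^2))"
    by (simp add: power2_norm_vec sum_subtractf sum.distrib sum_distrib_left)
  also have "\<bar>\<dots>\<bar> \<le> (\<Sum>i\<in>UNIV. 2 * taylor4_const k * (q$i)^4)"
    using neg_powr_even_part[OF \<open>k > 0\<close> q] by (intro order_trans[OF sum_abs sum_mono])
  also have "\<dots> \<le> 2 * taylor4_const k * norm q ^ 4"
    using sum_power4_components_le[of q] taylor4_const_nonneg[OF \<open>k > 0\<close>]
    by (simp add: sum_distrib_left[symmetric] mult_left_mono)
  finally show ?thesis .
qed

lemma sum_neg_powr_odd_part:
  fixes x q :: "real^'n" and k :: real
  assumes "k > 0" and q: "\<And>i. \<bar>q$i\<bar> \<le> 1/2"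
  shows "\<bar>(\<Sum>i\<in>UNIV. x$i * ((1 + q$i) powr (-k) - (1 - q$i) powr (-k))) + 2*k * (x \<bullet> q)\<bar>
           \<le> norm x * (k*(k+1)*(k+2)/3 * norm q ^ 3 + 2 * taylor4_const k * norm q ^ 4)"
proof -
  define K where "K = k*(k+1)*(k+2)/3"
  define E where "E i = K * \<bar>q$i\<bar>^3 + 2 * taylor4_const k * (q$i)^4" for i
  have "(\<Sum>i\<in>UNIV. x$i * ((1 + q$i) powr (-k) - (1 - q$i) powr (-k))) + 2*k * (x \<bullet> q)
      = (\<Sum>i\<in>UNIV. x$i * ((1 + q$i) powr (-k) - (1 - q$i) powr (-k) + 2*k*q$i))"
    unfolding inner_vec_def sum_distrib_left sum.distrib[symmetric]
    by (rule sum.cong) (simp_all add: algebra_simps)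
  also have "\<bar>\<dots>\<bar> \<le> (\<Sum>i\<in>UNIV. norm x * E i)"
  proof (intro order_trans[OF sum_abs sum_mono])
    fix i
    show "\<bar>x$i * ((1 + q$i) powr (-k) - (1 - q$i) powr (-k) + 2*k*q$i)\<bar> \<le> norm x * E i"
      unfolding abs_mult E_def K_def
      by (intro mult_mono component_le_norm_cart neg_powr_odd_part \<open>k > 0\<close> q) auto
  qed
  also have "\<dots> = norm x * (K * (\<Sum>i\<in>UNIV. \<bar>q$i\<bar>^3) + 2 * taylor4_const k * (\<Sum>i\<in>UNIV. (q$i)^4))"
    unfolding E_def by (simp add: sum.distrib sum_distrib_left algebra_simps)
  also have "\<dots> \<le> norm x * (K * norm q ^ 3 + 2 * taylor4_const k * norm q ^ 4)"
    using sum_abs_cube_components_le[of q] sum_power4_components_le[of q]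
      taylor4_const_nonneg[OF \<open>k > 0\<close>] \<open>k > 0\<close>
    by (intro mult_left_mono add_mono) (auto simp: K_def)
  finally show ?thesis
    unfolding K_def .
qed

section \<open>Two discrete superharmonic majorants\<close>

lemma norm_add_axis_power2: "norm ((y::real^'n) + axis i 1) ^ 2 = norm y ^ 2 + 2 * y$i + 1"
  by (simp add: power2_norm_eq_inner inner_add_left inner_add_right inner_axis inner_axis' inner_commute)

lemma norm_diff_axis_power2: "norm ((y::real^'n) - axis i 1) ^ 2 = norm y ^ 2 - 2 * y$i + 1"
  by (simp add: power2_norm_eq_inner inner_diff_left inner_diff_right inner_axis inner_axis' inner_commute)

(* The common centre of norm (y \<plusminus> axis i 1) ^ 2 + b = shift_center y b \<plusminus> 2 * y$i. *)
definition shift_center :: "real^'n \<Rightarrow> real \<Rightarrow> real" where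
  "shift_center y b = norm y ^ 2 + 1 + b"

context
  fixes y :: "real^'n" and b :: real
  assumes b: "3 \<le> b"
begin

lemma shift_center_ge: "4 \<le> shift_center y b" "norm y ^ 2 \<le> shift_center y b" "4 * norm y \<le> shift_center y b"
proof -
  show "4 \<le> shift_center y b" "norm y ^ 2 \<le> shift_center y b"
    unfolding shift_center_def using b zero_le_power2[of "norm y"] by linarith+
  have "0 \<le> (norm y - 2)^2" by simp
  then show "4 * norm y \<le> shift_center y b"
    using b by (simp add: shift_center_def power2_eq_square algebra_simps)
qed

lemma abs_scaled_component_le: "\<bar>((2 / shift_center y b) *\<^sub>R y) $ i\<bar> \<le> 1/2"
proof -
  have "4 * \<bar>y$i\<bar> \<le> shift_center y b"
    using component_le_norm_cart[of y i] shift_center_ge(3) by linarith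
  then show ?thesis
    using shift_center_ge(1) by (simp add: abs_mult field_simps)
qed

lemma norm_scaled: "norm ((2 / shift_center y b) *\<^sub>R y) = 2 * norm y / shift_center y b"
  using shift_center_ge(1) by simp

lemma neg_powr_norm_add_axis:
  "(norm (y + axis i 1) ^ 2 + b) powr (-k)
     = shift_center y b powr (-k) * (1 + ((2 / shift_center y b) *\<^sub>R y) $ i) powr (-k)"
  and neg_powr_norm_diff_axis:
  "(norm (y - axis i 1) ^ 2 + b) powr (-k)
     = shift_center y b powr (-k) * (1 - ((2 / shift_center y b) *\<^sub>R y) $ i) powr (-k)"
proof -
  let ?\<sigma> = "shift_center y b" and ?q = "((2 / shift_center y b) *\<^sub>R y) $ i"
  have "0 < 1 + ?q" "0 < 1 - ?q"
    using abs_scaled_component_le[of i] by arith+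
  moreover have "norm (y + axis i 1) ^ 2 + b = ?\<sigma> * (1 + ?q)" "norm (y - axis i 1) ^ 2 + b = ?\<sigma> * (1 - ?q)"
    using shift_center_ge(1)
    by (simp_all add: norm_add_axis_power2 norm_diff_axis_power2 shift_center_def field_simps)
  ultimately show "(norm (y + axis i 1) ^ 2 + b) powr (-k) = ?\<sigma> powr (-k) * (1 + ?q) powr (-k)"
    and "(norm (y - axis i 1) ^ 2 + b) powr (-k) = ?\<sigma> powr (-k) * (1 - ?q) powr (-k)"
    using shift_center_ge(1) by (simp_all add: powr_mult)
qed

lemma neg_powr_norm_ge:
  assumes "k > 0"
  shows "shift_center y b powr (-k) * (1 + k / shift_center y b) \<le> (norm y ^ 2 + b) powr (-k)"
proof -
  let ?\<sigma> = "shift_center y b"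
  have "norm y ^ 2 + b = ?\<sigma> * (1 + (- 1 / ?\<sigma>))"
    using shift_center_ge(1) by (simp add: shift_center_def field_simps)
  moreover have "1 + k / ?\<sigma> \<le> (1 + (- 1 / ?\<sigma>)) powr (-k)"
    using neg_powr_ge_tangent[OF assms, of "- 1 / ?\<sigma>"] shift_center_ge(1) by simp
  ultimately show ?thesis
    using shift_center_ge(1) by (simp add: powr_mult mult_left_mono)
qed

end

lemma ratio_power4_le:
  fixes r \<sigma> :: real
  assumes "r^2 \<le> \<sigma>" "0 < \<sigma>"
  shows "(2*r/\<sigma>)^4 \<le> 16 / \<sigma>^2"
proof -
  have "r^4 \<le> \<sigma>^2"
    using power_mono[OF assms(1), of 2] by (simp flip: power_mult)
  then have "(2*r/\<sigma>)^4 \<le> 16 * \<sigma>^2 / \<sigma>^4"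
    by (simp add: power_divide power_mult_distrib divide_right_mono)
  also have "\<dots> = 16 / \<sigma>^2"
    using assms(2) by (simp add: field_simps eval_nat_numeral)
  finally show ?thesis .
qed

lemma ratio_power3_le:
  fixes r \<sigma> :: real
  assumes "r^2 \<le> \<sigma>" "0 < \<sigma>" "0 \<le> r"
  shows "(2*r/\<sigma>)^3 \<le> 8 * r / \<sigma>^2"
proof -
  have "r^3 \<le> r * \<sigma>"
    using mult_left_mono[OF assms(1,3)] by (simp add: power2_eq_square power3_eq_cube)
  then have "(2*r/\<sigma>)^3 \<le> 8 * (r * \<sigma>) / \<sigma>^3"
    using assms(2) by (simp add: power_divide power_mult_distrib divide_right_mono)
  also have "\<dots> = 8 * r / \<sigma>^2"
    using assms(2) by (simp add: field_simps eval_nat_numeral)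
  finally show ?thesis .
qed

lemma mult_le_weighted_squares:
  fixes k K r :: real
  assumes "0 < k"
  shows "2 * K * r \<le> k * r^2 + K^2 / k"
proof -
  have "0 \<le> (k * r - K)^2 / k"
    using assms by simp
  also have "\<dots> = k * r^2 + K^2 / k - 2 * K * r"
    using assms by (simp add: field_simps power2_eq_square)
  finally show ?thesis
    by simp
qed

lemma mult_le_abs_bound:
  fixes g e B :: real
  assumes "\<bar>e\<bar> \<le> B" "0 \<le> g"
  shows "(g - 1) * e \<le> (g + 1) * B"
proof -
  have "(g - 1) * e \<le> \<bar>g - 1\<bar> * \<bar>e\<bar>"
    by (metis abs_ge_self abs_mult)
  also have "\<dots> \<le> (g + 1) * B"
    using assms by (intro mult_mono) auto
  finally show ?thesis .
qed

lemma green_shell_inequality: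
  fixes \<alpha> b r M :: real
  assumes "\<alpha> > 0" "3 \<le> b" "0 \<le> M" "8 * M \<le> \<alpha> * (\<alpha> + 1) * (1 + b)"
  defines "\<sigma> \<equiv> r^2 + 1 + b"
  shows "2 * (2*\<alpha> + 2) + \<alpha>*(\<alpha>+1) * (2*r/\<sigma>)^2 + 2*M * (2*r/\<sigma>)^4 \<le> 2 * (2*\<alpha> + 2) * (1 + \<alpha>/\<sigma>)"
proof -
  have \<sigma>: "4 \<le> \<sigma>" "r^2 \<le> \<sigma>"
    using assms(2) zero_le_power2[of r] unfolding \<sigma>_def by linarith+
  have "2*M * (2*r/\<sigma>)^4 \<le> 32 * M / \<sigma>^2"
    using mult_left_mono[OF ratio_power4_le[OF \<sigma>(2)], of "2*M"] \<sigma>(1) assms(3) by simp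
  moreover have "4 * \<alpha>*(\<alpha>+1) * r^2 + 32 * M \<le> 4 * \<alpha>*(\<alpha>+1) * \<sigma>"
    using assms(4) unfolding \<sigma>_def by (simp add: algebra_simps)
  then have "(4 * \<alpha>*(\<alpha>+1) * r^2 + 32 * M) / \<sigma>^2 \<le> 4 * \<alpha>*(\<alpha>+1) / \<sigma>"
    using \<sigma>(1) by (simp add: divide_le_eq power2_eq_square mult.assoc)
  moreover have "\<alpha>*(\<alpha>+1) * (2*r/\<sigma>)^2 = 4 * \<alpha>*(\<alpha>+1) * r^2 / \<sigma>^2"
    by (simp add: power_divide power_mult_distrib)
  moreover have "2 * (2*\<alpha> + 2) * (1 + \<alpha>/\<sigma>) = 2 * (2*\<alpha> + 2) + 4 * \<alpha>*(\<alpha>+1) / \<sigma>"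
    by (simp add: algebra_simps add_divide_distrib)
  ultimately show ?thesis
    by (simp add: add_divide_distrib)
qed

lemma poisson_even_error_le:
  fixes k b g M \<sigma> e :: real
  assumes "1 \<le> k" "0 \<le> b" "0 \<le> g" "0 \<le> M" "8 * M \<le> k * (1 + b)" "1 \<le> \<sigma>"
    and "\<bar>e\<bar> \<le> 32 * M / \<sigma>^2"
  shows "(g - 1) * e \<le> 4*k*(k+1)*g*(1+b)/\<sigma>^2 + 4*k*(1+b)/\<sigma>"
proof -
  have "0 \<le> 4*k*(1+b)*k" "4*k*(k+1)*(1+b) = 4*(k*(1+b)) + 4*k*(1+b)*k"
    using assms(1,2) by (simp_all add: algebra_simps)
  then have "32 * M \<le> 4*k*(k+1)*(1+b)"
    using assms(5) by linarith
  then have "g * (32 * M) \<le> g * (4*k*(k+1)*(1+b))"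
    using \<open>0 \<le> g\<close> by (rule mult_left_mono)
  then have "g * (32 * M) / \<sigma>^2 \<le> 4*k*(k+1)*g*(1+b) / \<sigma>^2"
    using divide_right_mono[of _ _ "\<sigma>^2"] by (simp add: mult_ac)
  moreover have "32 * M / \<sigma>^2 \<le> 4*k*(1+b)/\<sigma>"
  proof -
    have "32 * M / \<sigma>^2 \<le> 32 * M / \<sigma>"
      using assms(4,6) by (intro divide_left_mono) (auto simp: power2_eq_square)
    also have "\<dots> \<le> 4*k*(1+b)/\<sigma>"
      using assms(5,6) by (intro divide_right_mono) auto
    finally show ?thesis .
  qed
  moreover have "(g - 1) * e \<le> (g + 1) * (32 * M / \<sigma>^2)"
    using assms(7,3) by (rule mult_le_abs_bound)
  ultimately show ?thesis
    by (simp add: distrib_right add_divide_distrib)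
qed

lemma poisson_odd_error_le:
  fixes k K M r \<xi> \<mu> \<sigma> e :: real
  assumes "0 \<le> k" "0 \<le> \<xi>" "2 * \<xi> \<le> \<mu>" "0 \<le> K" "0 \<le> M" "0 \<le> r" "r^2 \<le> \<sigma>" "0 < \<sigma>"
    and amgm: "8 * K * r + 32 * M \<le> 4 * k * \<sigma>"
    and "\<bar>e\<bar> \<le> \<xi> * (K * (2*r/\<sigma>)^3 + 2*M * (2*r/\<sigma>)^4)"
  shows "- 2 * e \<le> 4 * k * \<mu> / \<sigma>"
proof -
  have "- 2 * e \<le> 2 * \<xi> * (K * (2*r/\<sigma>)^3 + 2*M * (2*r/\<sigma>)^4)"
    using assms(10) by (simp add: abs_le_iff mult.assoc)
  also have "\<dots> \<le> 2 * \<xi> * (K * (8 * r / \<sigma>^2) + 2*M * (16 / \<sigma>^2))"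
    using ratio_power3_le[OF assms(7,8,6)] ratio_power4_le[OF assms(7,8)] assms(2,4,5)
    by (intro mult_left_mono add_mono) auto
  also have "\<dots> = 2 * \<xi> * (8 * K * r + 32 * M) / \<sigma>^2"
    by (simp add: add_divide_distrib algebra_simps)
  also have "\<dots> \<le> 2 * \<xi> * (4 * k * \<sigma>) / \<sigma>^2"
    using amgm assms(2) by (intro divide_right_mono mult_left_mono) auto
  also have "\<dots> = 4 * k * (2 * \<xi>) / \<sigma>"
    using assms(8) by (simp add: power2_eq_square)
  also have "\<dots> \<le> 4 * k * \<mu> / \<sigma>"
    using assms(1,3,8) by (intro divide_right_mono mult_left_mono) auto
  finally show ?thesis .
qed

lemma poisson_shell_inequality:
  fixes k b r g \<mu> \<xi> M K Ev Od ip :: real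
  assumes k: "1 \<le> k" and b: "3 \<le> b" and "0 \<le> r" "0 \<le> g" "0 \<le> \<xi>" "2 * \<xi> \<le> \<mu>" "0 \<le> M" "0 \<le> K"
    and const: "K^2 / k + 8 * M \<le> k * (1 + b)" and \<sigma>_eq: "\<sigma> = r^2 + 1 + b"
    and Ev: "\<bar>Ev - (4*k + k*(k+1) * (2*r/\<sigma>)^2)\<bar> \<le> 2*M * (2*r/\<sigma>)^4"
    and Od: "\<bar>Od + 2*k * ip\<bar> \<le> \<xi> * (K * (2*r/\<sigma>)^3 + 2*M * (2*r/\<sigma>)^4)"
    and ip: "ip = (r^2 - g - \<mu>) / \<sigma>"
  shows "(g - 1) * Ev - 2 * Od \<le> 4*k * g * (1 + k/\<sigma>)"
proof -
  have \<sigma>: "4 \<le> \<sigma>" "r^2 \<le> \<sigma>" "0 < \<sigma>"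
    using b zero_le_power2[of r] unfolding \<sigma>_eq by linarith+
  have "0 \<le> K^2 / k"
    using k by simp
  then have "8 * M \<le> k * (1 + b)"
    using const by linarith
  have "8 * K * r \<le> 4 * k * r^2 + 4 * (K^2 / k)"
    using mult_le_weighted_squares[of k K r] k by simp
  moreover have "4 * k * \<sigma> = 4 * k * r^2 + 4 * k * (1 + b)"
    unfolding \<sigma>_eq by (simp add: algebra_simps)
  ultimately have amgm: "8 * K * r + 32 * M \<le> 4 * k * \<sigma>"
    using const by linarith
  define e1 where "e1 = Ev - (4*k + k*(k+1) * (2*r/\<sigma>)^2)"
  define e2 where "e2 = Od + 2*k * ip"
  have "\<bar>e1\<bar> \<le> 32 * M / \<sigma>^2"
    using Ev mult_left_mono[OF ratio_power4_le[OF \<sigma>(2,3)], of "2 * M"] \<open>0 \<le> M\<close> unfolding e1_def by simp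
  then have err1: "(g - 1) * e1 \<le> 4*k*(k+1)*g*(1+b)/\<sigma>^2 + 4*k*(1+b)/\<sigma>"
    using poisson_even_error_le k b \<open>0 \<le> g\<close> \<open>0 \<le> M\<close> \<open>8 * M \<le> k * (1 + b)\<close> \<sigma>(1) by simp
  have err2: "- 2 * e2 \<le> 4 * k * \<mu> / \<sigma>"
    unfolding e2_def using k \<open>0 \<le> \<xi>\<close> \<open>2 * \<xi> \<le> \<mu>\<close> \<open>0 \<le> K\<close> \<open>0 \<le> M\<close> \<open>0 \<le> r\<close> \<sigma>(2,3) amgm Od
    by (intro poisson_odd_error_le) auto
  \<comment> \<open>An exact identity; the subtracted margins absorb the errors e1 and e2.\<close>
  have "(g - 1) * Ev - 2 * Od = 4*k*g*(1 + k/\<sigma>)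
      - (4*k*(1+b)/\<sigma> + 4*k*(k+1)*g*(1+b)/\<sigma>^2 + 4*k*(k+1)*r^2/\<sigma>^2 + 4*k*\<mu>/\<sigma>)
      + (g - 1) * e1 - 2 * e2"
  proof -
    have b_eq: "b = \<sigma> - r^2 - 1"
      by (simp add: \<sigma>_eq)
    show ?thesis
      using \<sigma>(3) unfolding e1_def e2_def ip b_eq by (simp add: field_simps power2_eq_square)
  qed
  moreover have "0 \<le> 4*k*(k+1)*r^2/\<sigma>^2"
    using k by simp
  ultimately show ?thesis
    using err1 err2 by linarith
qed

(* Each summand absorbs one of the Taylor error terms of the two shell inequalities above. *)
definition majorant_const :: "real \<Rightarrow> real" where
  "majorant_const d = 3 + 8 * taylor4_const (d/2) + ((d/2) * (d/2 + 1) * (d/2 + 2) / 3)^2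
                    + 16 * taylor4_const ((d - 2)/2)"

lemma majorant_const_ge_3: "3 \<le> d \<Longrightarrow> 3 \<le> majorant_const d"
  unfolding majorant_const_def using taylor4_const_nonneg[of "d/2"] taylor4_const_nonneg[of "(d-2)/2"]
  by (simp add: add_nonneg_nonneg)

lemma majorant_const_poisson:
  assumes "3 \<le> d"
  defines "k \<equiv> d/2"
  shows "(k * (k + 1) * (k + 2) / 3)^2 / k + 8 * taylor4_const k \<le> k * (1 + majorant_const d)"
proof -
  let ?K2 = "(k * (k + 1) * (k + 2) / 3)^2" and ?M = "taylor4_const k"
  have "1 \<le> k" "0 \<le> ?M"
    using assms taylor4_const_nonneg[of k] by (simp_all add: k_def)
  then have "?K2 / k \<le> ?K2"
    by (simp add: divide_le_eq mult_le_cancel_left1)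
  then have "?K2 / k + 8 * ?M \<le> ?K2 + 8 * ?M"
    by simp
  also have "\<dots> \<le> 1 * majorant_const d"
    using taylor4_const_nonneg[of "(d-2)/2"] assms unfolding majorant_const_def k_def by simp
  also have "\<dots> \<le> k * (1 + majorant_const d)"
    using \<open>1 \<le> k\<close> majorant_const_ge_3[OF assms(1)] by (intro mult_mono) auto
  finally show ?thesis .
qed

lemma majorant_const_green:
  assumes "3 \<le> d"
  defines "\<alpha> \<equiv> (d - 2)/2"
  shows "8 * taylor4_const \<alpha> \<le> \<alpha> * (\<alpha> + 1) * (1 + majorant_const d)"
proof -
  have "1/2 \<le> \<alpha>" "0 \<le> taylor4_const \<alpha>"
    using assms taylor4_const_nonneg[of \<alpha>] by (simp_all add: \<alpha>_def)
  then have "3/4 \<le> \<alpha> * (\<alpha> + 1)"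
    using mult_mono[of "1/2" \<alpha> "3/2" "\<alpha> + 1"] by simp
  moreover have "16 * taylor4_const \<alpha> \<le> 1 + majorant_const d"
    using taylor4_const_nonneg[of "d/2"] assms unfolding majorant_const_def \<alpha>_def by simp
  ultimately have "3/4 * (16 * taylor4_const \<alpha>) \<le> \<alpha> * (\<alpha> + 1) * (1 + majorant_const d)"
    using \<open>0 \<le> taylor4_const \<alpha>\<close> by (intro mult_mono) auto
  then show ?thesis
    using \<open>0 \<le> taylor4_const \<alpha>\<close> by simp
qed

(* A smoothed version of the Green function norm u ^ (2 - d). *)
definition green_majorant :: "real \<Rightarrow> real^'n \<Rightarrow> real" where
  "green_majorant d u = (norm u ^ 2 + majorant_const d) powr (-((d - 2)/2))"

lemma green_majorant_superharmonic:
  fixes u :: "real^'n"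
  assumes "3 \<le> CARD('n)"
  shows "(\<Sum>i\<in>UNIV. green_majorant CARD('n) (u + axis i 1) + green_majorant CARD('n) (u - axis i 1))
           \<le> 2 * CARD('n) * green_majorant CARD('n) u"
proof -
  define d \<alpha> b where "d = real CARD('n)" and "\<alpha> = (d - 2)/2" and "b = majorant_const d"
  define \<sigma> where "\<sigma> = shift_center u b"
  define q where "q = (2 / \<sigma>) *\<^sub>R u"
  have d: "3 \<le> d" and "0 < \<alpha>" and b: "3 \<le> b"
    using assms majorant_const_ge_3 by (auto simp: d_def \<alpha>_def b_def)
  have d\<alpha>: "d = 2 * \<alpha> + 2"
    by (simp add: \<alpha>_def field_simps)
  have nq: "norm q = 2 * norm u / \<sigma>"
    unfolding q_def \<sigma>_def by (rule norm_scaled[OF b])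
  have gm: "green_majorant CARD('n) v = (norm v ^ 2 + b) powr (-\<alpha>)" for v :: "real^'n"
    by (simp add: green_majorant_def d_def \<alpha>_def b_def)
  have "(\<Sum>i\<in>UNIV. green_majorant CARD('n) (u + axis i 1) + green_majorant CARD('n) (u - axis i 1))
      = \<sigma> powr (-\<alpha>) * (\<Sum>i\<in>UNIV. (1 + q$i) powr (-\<alpha>) + (1 - q$i) powr (-\<alpha>))"
    unfolding gm neg_powr_norm_add_axis[OF b] neg_powr_norm_diff_axis[OF b]
    by (simp add: sum_distrib_left distrib_left \<sigma>_def q_def)
  also have "\<dots> \<le> \<sigma> powr (-\<alpha>) * (2 * d * (1 + \<alpha>/\<sigma>))"
  proof (intro mult_left_mono)
    have q: "\<And>i. \<bar>q$i\<bar> \<le> 1/2"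
      unfolding q_def \<sigma>_def by (rule abs_scaled_component_le[OF b])
    have "(\<Sum>i\<in>UNIV. (1 + q$i) powr (-\<alpha>) + (1 - q$i) powr (-\<alpha>))
        \<le> 2 * real CARD('n) + \<alpha>*(\<alpha>+1) * norm q ^ 2 + 2 * taylor4_const \<alpha> * norm q ^ 4"
      using abs_le_D1[OF sum_neg_powr_even_part[OF \<open>0 < \<alpha>\<close> q]] by linarith
    also have "\<dots> = 2 * (2*\<alpha> + 2) + \<alpha>*(\<alpha>+1) * norm q ^ 2 + 2 * taylor4_const \<alpha> * norm q ^ 4"
      using d\<alpha> by (simp add: d_def)
    also have "\<dots> \<le> 2 * (2*\<alpha> + 2) * (1 + \<alpha>/\<sigma>)"
      unfolding nq using green_shell_inequality[OF \<open>0 < \<alpha>\<close> b taylor4_const_nonneg[OF \<open>0 < \<alpha>\<close>]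
          majorant_const_green[OF d, folded \<alpha>_def b_def], of "norm u"]
      by (simp add: \<sigma>_def shift_center_def)
    finally show "(\<Sum>i\<in>UNIV. (1 + q$i) powr (-\<alpha>) + (1 - q$i) powr (-\<alpha>)) \<le> 2 * d * (1 + \<alpha>/\<sigma>)"
      by (simp only: d\<alpha>)
  qed simp
  also have "\<dots> \<le> 2 * d * green_majorant CARD('n) u"
    using neg_powr_norm_ge[OF b \<open>0 < \<alpha>\<close>, of u] d
    by (simp add: gm \<sigma>_def mult.left_commute mult_left_mono)
  finally show ?thesis
    by (simp add: d_def)
qed

(* A smoothed version of the Poisson kernel (c - norm u ^ 2) / norm (u - w) ^ d of the ball of
   radius sqrt c. *)
definition poisson_majorant :: "real \<Rightarrow> real \<Rightarrow> real^'n \<Rightarrow> real^'n \<Rightarrow> real" where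
  "poisson_majorant d c w u = (c - norm u ^ 2) * (norm (u - w) ^ 2 + majorant_const d) powr (-(d/2))"

lemma inner_eq_norm_diff:
  fixes x w :: "real^'n"
  shows "x \<bullet> (x - w) = (norm (x - w) ^ 2 - (c - norm x ^ 2) - (norm w ^ 2 - c)) / 2"
  by (simp add: power2_norm_eq_inner inner_diff_left inner_diff_right inner_commute field_simps)

lemma neg_powr_axis_sum_eq:
  fixes x w :: "real^'n"
  assumes b: "3 \<le> b"
  defines "\<sigma> \<equiv> shift_center (x - w) b" and "q \<equiv> (2 / shift_center (x - w) b) *\<^sub>R (x - w)"
  shows "(\<Sum>i\<in>UNIV. (c - norm (x + axis i 1) ^ 2) * (norm (x + axis i 1 - w) ^ 2 + b) powr (-k)
                 + (c - norm (x - axis i 1) ^ 2) * (norm (x - axis i 1 - w) ^ 2 + b) powr (-k))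
       = \<sigma> powr (-k) * ((c - norm x ^ 2 - 1) * (\<Sum>i\<in>UNIV. (1 + q$i) powr (-k) + (1 - q$i) powr (-k))
                        - 2 * (\<Sum>i\<in>UNIV. x$i * ((1 + q$i) powr (-k) - (1 - q$i) powr (-k))))"
proof -
  have "(\<Sum>i\<in>UNIV. (c - norm (x + axis i 1) ^ 2) * (norm (x + axis i 1 - w) ^ 2 + b) powr (-k)
                 + (c - norm (x - axis i 1) ^ 2) * (norm (x - axis i 1 - w) ^ 2 + b) powr (-k))
      = (\<Sum>i\<in>UNIV. (c - norm x ^ 2 - 1 - 2 * x$i) * (\<sigma> powr (-k) * (1 + q$i) powr (-k))
                 + (c - norm x ^ 2 - 1 + 2 * x$i) * (\<sigma> powr (-k) * (1 - q$i) powr (-k)))"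
  proof (rule sum.cong[OF refl])
    fix i
    have "x + axis i 1 - w = (x - w) + axis i 1" "x - axis i 1 - w = (x - w) - axis i 1"
      by (simp_all add: algebra_simps)
    moreover have "(norm ((x - w) + axis i 1) ^ 2 + b) powr (-k) = \<sigma> powr (-k) * (1 + q$i) powr (-k)"
      "(norm ((x - w) - axis i 1) ^ 2 + b) powr (-k) = \<sigma> powr (-k) * (1 - q$i) powr (-k)"
      unfolding \<sigma>_def q_def by (rule neg_powr_norm_add_axis[OF b] neg_powr_norm_diff_axis[OF b])+
    ultimately show "(c - norm (x + axis i 1) ^ 2) * (norm (x + axis i 1 - w) ^ 2 + b) powr (-k)
                 + (c - norm (x - axis i 1) ^ 2) * (norm (x - axis i 1 - w) ^ 2 + b) powr (-k)
      = (c - norm x ^ 2 - 1 - 2 * x$i) * (\<sigma> powr (-k) * (1 + q$i) powr (-k))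
        + (c - norm x ^ 2 - 1 + 2 * x$i) * (\<sigma> powr (-k) * (1 - q$i) powr (-k))"
      by (simp only: norm_add_axis_power2 norm_diff_axis_power2) (simp add: algebra_simps)
  qed
  also have "\<dots> = \<sigma> powr (-k) * ((c - norm x ^ 2 - 1) * (\<Sum>i\<in>UNIV. (1 + q$i) powr (-k) + (1 - q$i) powr (-k))
                        - 2 * (\<Sum>i\<in>UNIV. x$i * ((1 + q$i) powr (-k) - (1 - q$i) powr (-k))))"
    by (simp add: sum_distrib_left sum_subtractf sum.distrib algebra_simps)
  finally show ?thesis .
qed

lemma poisson_shell_bound:
  fixes x w :: "real^'n"
  assumes "3 \<le> CARD('n)" and "norm x ^ 2 \<le> c" and "2 * norm x \<le> norm w ^ 2 - c"
  defines "k \<equiv> real CARD('n) / 2" and "b \<equiv> majorant_const CARD('n)"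
  defines "\<sigma> \<equiv> shift_center (x - w) b" and "q \<equiv> (2 / shift_center (x - w) b) *\<^sub>R (x - w)"
  shows "(c - norm x ^ 2 - 1) * (\<Sum>i\<in>UNIV. (1 + q$i) powr (-k) + (1 - q$i) powr (-k))
           - 2 * (\<Sum>i\<in>UNIV. x$i * ((1 + q$i) powr (-k) - (1 - q$i) powr (-k)))
         \<le> 4*k * (c - norm x ^ 2) * (1 + k/\<sigma>)"
proof -
  have d: "3 \<le> real CARD('n)" and "1 \<le> k" and b: "3 \<le> b"
    using assms(1) majorant_const_ge_3 by (auto simp: k_def b_def)
  then have "0 < k"
    by simp
  have q: "\<And>i. \<bar>q$i\<bar> \<le> 1/2"
    unfolding q_def by (rule abs_scaled_component_le[OF b])
  have nq: "norm q = 2 * norm (x - w) / \<sigma>"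
    unfolding q_def \<sigma>_def by (rule norm_scaled[OF b])
  have \<sigma>: "\<sigma> = norm (x - w) ^ 2 + 1 + b"
    by (simp add: \<sigma>_def shift_center_def)
  show ?thesis
  proof (rule poisson_shell_inequality[OF \<open>1 \<le> k\<close> b norm_ge_zero _ norm_ge_zero assms(3)
        taylor4_const_nonneg[OF \<open>0 < k\<close>] _ majorant_const_poisson[OF d, folded k_def b_def] \<sigma>])
    show "0 \<le> c - norm x ^ 2" "0 \<le> k * (k + 1) * (k + 2) / 3"
      using assms(2) \<open>0 < k\<close> by simp_all
    show "\<bar>(\<Sum>i\<in>UNIV. (1 + q$i) powr (-k) + (1 - q$i) powr (-k)) - (4*k + k*(k+1) * (2 * norm (x - w) / \<sigma>)^2)\<bar>
        \<le> 2 * taylor4_const k * (2 * norm (x - w) / \<sigma>)^4"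
      using sum_neg_powr_even_part[OF \<open>0 < k\<close> q] by (simp add: nq k_def)
    show "\<bar>(\<Sum>i\<in>UNIV. x$i * ((1 + q$i) powr (-k) - (1 - q$i) powr (-k))) + 2*k * (x \<bullet> q)\<bar>
        \<le> norm x * (k * (k + 1) * (k + 2) / 3 * (2 * norm (x - w) / \<sigma>)^3
                     + 2 * taylor4_const k * (2 * norm (x - w) / \<sigma>)^4)"
      using sum_neg_powr_odd_part[OF \<open>0 < k\<close> q, of x] by (simp add: nq)
    show "x \<bullet> q = (norm (x - w) ^ 2 - (c - norm x ^ 2) - (norm w ^ 2 - c)) / \<sigma>"
      using inner_eq_norm_diff[of x w c] by (simp add: q_def \<sigma>_def)
  qed
qed

lemma poisson_majorant_superharmonic:
  fixes x w :: "real^'n"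
  assumes "3 \<le> CARD('n)" and "norm x ^ 2 \<le> c" and "2 * norm x \<le> norm w ^ 2 - c"
  shows "(\<Sum>i\<in>UNIV. poisson_majorant CARD('n) c w (x + axis i 1) + poisson_majorant CARD('n) c w (x - axis i 1))
           \<le> 2 * CARD('n) * poisson_majorant CARD('n) c w x"
proof -
  define k b where "k = real CARD('n) / 2" and "b = majorant_const CARD('n)"
  define \<sigma> q where "\<sigma> = shift_center (x - w) b" and "q = (2 / \<sigma>) *\<^sub>R (x - w)"
  have b: "3 \<le> b" and "0 < k"
    using assms(1) majorant_const_ge_3 by (auto simp: k_def b_def)
  have pm: "poisson_majorant CARD('n) c w v = (c - norm v ^ 2) * (norm (v - w) ^ 2 + b) powr (-k)" for v
    by (simp add: poisson_majorant_def k_def b_def)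
  have "(\<Sum>i\<in>UNIV. poisson_majorant CARD('n) c w (x + axis i 1) + poisson_majorant CARD('n) c w (x - axis i 1))
      = \<sigma> powr (-k) * ((c - norm x ^ 2 - 1) * (\<Sum>i\<in>UNIV. (1 + q$i) powr (-k) + (1 - q$i) powr (-k))
                        - 2 * (\<Sum>i\<in>UNIV. x$i * ((1 + q$i) powr (-k) - (1 - q$i) powr (-k))))"
    unfolding pm \<sigma>_def q_def by (rule neg_powr_axis_sum_eq[OF b])
  also have "\<dots> \<le> \<sigma> powr (-k) * (4*k * (c - norm x ^ 2) * (1 + k/\<sigma>))"
  proof (rule mult_left_mono)
    show "(c - norm x ^ 2 - 1) * (\<Sum>i\<in>UNIV. (1 + q$i) powr (-k) + (1 - q$i) powr (-k))
          - 2 * (\<Sum>i\<in>UNIV. x$i * ((1 + q$i) powr (-k) - (1 - q$i) powr (-k)))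
        \<le> 4*k * (c - norm x ^ 2) * (1 + k/\<sigma>)"
      unfolding k_def b_def \<sigma>_def q_def by (rule poisson_shell_bound[OF assms])
  qed simp
  also have "\<dots> = 2 * CARD('n) * (c - norm x ^ 2) * (\<sigma> powr (-k) * (1 + k/\<sigma>))"
    by (simp add: k_def)
  also have "\<dots> \<le> 2 * CARD('n) * (c - norm x ^ 2) * (norm (x - w) ^ 2 + b) powr (-k)"
    using neg_powr_norm_ge[OF b \<open>0 < k\<close>, of "x - w"] assms(2)
    by (intro mult_left_mono) (auto simp: \<sigma>_def)
  also have "\<dots> = 2 * CARD('n) * poisson_majorant CARD('n) c w x"
    by (simp add: pm)
  finally show ?thesis .
qed

section \<open>Hitting a single lattice point before leaving a ball\<close>

lemma green_majorant_pos:
  assumes "3 \<le> d"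
  shows "0 < green_majorant d u"
proof -
  have "0 < norm u ^ 2 + majorant_const d"
    using majorant_const_ge_3[OF assms] by (intro add_nonneg_pos) auto
  then show ?thesis
    by (simp add: green_majorant_def)
qed

lemma hit_point_le_green_majorant:
  fixes y z :: "int^'n"
  assumes "3 \<le> CARD('n)"
  shows "hit_prob {z} B N y \<le> green_majorant CARD('n) (lat y - lat z) / green_majorant CARD('n) (0::real^'n)"
proof -
  define h where "h u = green_majorant CARD('n) (lat u - lat z) / green_majorant CARD('n) (0::real^'n)" for u
  have pos: "0 < green_majorant CARD('n) v" for v :: "real^'n"
    using assms by (intro green_majorant_pos) simp
  have "h z = 1"
    using pos[of 0] by (simp add: h_def)
  show ?thesis
  proof (cases "y = z")
    case True
    then show ?thesis
      using hit_prob_le_1 \<open>h z = 1\<close> by (simp add: h_def)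
  next
    case False
    show ?thesis
      unfolding h_def[symmetric]
    proof (rule hit_prob_le_superharmonic[where S = "{z}"])
      show "0 \<le> h u" for u
        using pos by (simp add: h_def less_imp_le)
      show "(\<Sum>e\<in>srw_steps. h (u + e)) \<le> card (srw_steps :: (int^'n) set) * h u" for u
      proof -
        have "(\<Sum>e\<in>srw_steps. h (u + e))
            = (\<Sum>i\<in>UNIV. green_majorant CARD('n) ((lat u - lat z) + axis i 1)
                         + green_majorant CARD('n) ((lat u - lat z) - axis i 1)) / green_majorant CARD('n) (0::real^'n)"
          unfolding h_def sum_srw_steps[of "\<lambda>v. green_majorant CARD('n) (v - lat z) / _"]
          by (simp add: sum_divide_distrib add_divide_distrib algebra_simps)
        also have "\<dots> \<le> card (srw_steps :: (int^'n) set) * h u"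
          using divide_right_mono[OF green_majorant_superharmonic[OF assms] less_imp_le[OF pos]]
          by (simp add: h_def card_srw_steps)
        finally show ?thesis .
      qed
      show "hit_prob {z} B M (u + e) \<le> h (u + e)" if "u + e \<in> {z}" for u e M
        using that hit_prob_le_1 \<open>h z = 1\<close> by simp
    qed (use False in auto)
  qed
qed

lemma green_majorant_ratio_le:
  assumes "3 \<le> d"
  shows "green_majorant d u / green_majorant d 0
           \<le> majorant_const d powr ((d - 2)/2) * (1 + norm u ^ 2) powr (-((d - 2)/2))"
proof -
  have b: "3 \<le> majorant_const d"
    using majorant_const_ge_3[OF assms] .
  have "green_majorant d u / green_majorant d 0
      = majorant_const d powr ((d - 2)/2) * (norm u ^ 2 + majorant_const d) powr (-((d - 2)/2))"
    using b by (simp add: green_majorant_def powr_minus_divide)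
  also have "\<dots> \<le> majorant_const d powr ((d - 2)/2) * (1 + norm u ^ 2) powr (-((d - 2)/2))"
    using b assms by (intro mult_left_mono powr_mono2') (auto simp: add_pos_nonneg)
  finally show ?thesis .
qed

lemma poisson_majorant_ge_near:
  fixes Y Z w :: "real^'n"
  assumes "3 \<le> d" "1 \<le> t" "norm (Y - Z) < t/2" "norm Z = \<rho> + 1 - t" "norm (Z - w) = t + 1"
  shows "(\<rho> + 1) * (t/2) * ((7 + majorant_const d) * (1 + t^2)) powr (-(d/2))
           \<le> poisson_majorant d ((\<rho> + 1)^2) w Y"
proof -
  let ?b = "majorant_const d"
  have b: "3 \<le> ?b"
    using majorant_const_ge_3[OF assms(1)] .
  have "norm Y \<le> norm Z + norm (Y - Z)"
    using norm_triangle_ineq[of Z "Y - Z"] by simp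
  then have Y: "norm Y < \<rho> + 1 - t/2"
    using assms(3,4) by linarith
  have "(\<rho> + 1) * (t/2) \<le> (\<rho> + 1 + norm Y) * (\<rho> + 1 - norm Y)"
    using Y assms(2,4) norm_ge_zero[of Z] by (intro mult_mono) auto
  then have near_centre: "(\<rho> + 1) * (t/2) \<le> (\<rho> + 1)^2 - norm Y ^ 2"
    by (simp add: power2_eq_square algebra_simps)
  have "norm (Y - w) \<le> norm (Y - Z) + norm (Z - w)"
    using norm_triangle_ineq[of "Y - Z" "Z - w"] by simp
  then have "norm (Y - w) \<le> 5/2 * t"
    using assms(2,3,5) by linarith
  then have "norm (Y - w) ^ 2 \<le> (5/2 * t)^2"
    by (rule power_mono) simp
  moreover have "(5/2 * t)^2 = 25/4 * t^2"
    by (simp add: power2_eq_square)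
  ultimately have "norm (Y - w) ^ 2 \<le> 7 + 7 * t^2"
    using zero_le_power2[of t] by linarith
  moreover have "?b \<le> ?b * (1 + t^2)"
    using b by simp
  ultimately have far_from_pole: "norm (Y - w) ^ 2 + ?b \<le> (7 + ?b) * (1 + t^2)"
    by (simp add: algebra_simps)
  have "((7 + ?b) * (1 + t^2)) powr (-(d/2)) \<le> (norm (Y - w) ^ 2 + ?b) powr (-(d/2))"
    using far_from_pole b assms(1) by (intro powr_mono2') (auto intro: add_nonneg_pos)
  moreover have "0 \<le> (\<rho> + 1) * (t/2)"
    using assms(2,4) norm_ge_zero[of Z] by simp
  ultimately show ?thesis
    unfolding poisson_majorant_def using near_centre by (intro mult_mono) auto
qed

lemma poisson_majorant_0_le:
  fixes w :: "real^'n"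
  assumes "3 \<le> d" "0 < \<rho>" "norm w = \<rho> + 2"
  shows "poisson_majorant d ((\<rho> + 1)^2) w 0 \<le> (\<rho> + 1) powr (2 - d)"
proof -
  have "((\<rho> + 2)^2 + majorant_const d) powr (-(d/2)) \<le> ((\<rho> + 1)^2) powr (-(d/2))"
  proof (rule powr_mono2')
    have "(\<rho> + 1)^2 \<le> (\<rho> + 2)^2"
      by (rule power_mono) (use assms(2) in auto)
    then show "(\<rho> + 1)^2 \<le> (\<rho> + 2)^2 + majorant_const d"
      using majorant_const_ge_3[OF assms(1)] by simp
  qed (use assms in auto)
  also have "((\<rho> + 1)^2) powr (-(d/2)) = (\<rho> + 1) powr (- d)"
    using assms(2) by (simp add: powr_powr flip: powr_numeral)
  finally have "poisson_majorant d ((\<rho> + 1)^2) w 0 \<le> (\<rho> + 1)^2 * (\<rho> + 1) powr (- d)"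
    unfolding poisson_majorant_def using assms(3) by (simp add: mult_left_mono)
  also have "\<dots> = (\<rho> + 1) powr (2 - d)"
    using assms(2) by (simp add: powr_diff powr_minus_divide flip: powr_numeral)
  finally show ?thesis .
qed

lemma neg_powr_one_plus_square_le:
  fixes u t \<alpha> :: real
  assumes "0 \<le> u" "1 \<le> t" "t/2 - 1 \<le> u" "0 \<le> \<alpha>"
  shows "(1 + u^2) powr (-\<alpha>) \<le> 17 powr \<alpha> * (1 + t^2) powr (-\<alpha>)"
proof -
  have "1 + t^2 \<le> 17 + 17 * u^2"
  proof (cases "4 \<le> t")
    case True
    then have "(t/4)^2 \<le> u^2"
      using assms by (intro power_mono) auto
    then have "t^2 / 16 \<le> u^2"
      by (simp add: power_divide)
    then show ?thesis
      using zero_le_power2[of u] by linarith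
  next
    case False
    then have "t^2 \<le> 4^2"
      using assms by (intro power_mono) auto
    then have "t^2 \<le> 16"
      by simp
    then show ?thesis
      using zero_le_power2[of u] by linarith
  qed
  then have "(1 + t^2) / 17 \<le> 1 + u^2"
    by simp
  then have "(1 + u^2) powr (-\<alpha>) \<le> ((1 + t^2) / 17) powr (-\<alpha>)"
    using assms(4) by (intro powr_mono2') (auto intro: add_pos_nonneg)
  also have "\<dots> = 17 powr \<alpha> * (1 + t^2) powr (-\<alpha>)"
    by (simp add: powr_divide powr_minus_divide add_pos_nonneg)
  finally show ?thesis .
qed

lemma poisson_majorant_nonneg: "norm v ^ 2 \<le> c \<Longrightarrow> 0 \<le> poisson_majorant d c w v"
  by (simp add: poisson_majorant_def)

lemma max_poisson_majorant_superharmonic: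
  fixes x :: "int^'n" and w :: "real^'n" and h :: "int^'n \<Rightarrow> real"
  assumes "3 \<le> CARD('n)" "0 \<le> \<beta>" "norm (lat x) < \<rho>" "norm w = \<rho> + 2"
  defines "h \<equiv> \<lambda>u. max (\<beta> * poisson_majorant CARD('n) ((\<rho> + 1)^2) w (lat u)) 0"
  shows "(\<Sum>e\<in>srw_steps. h (x + e)) \<le> card (srw_steps :: (int^'n) set) * h x"
proof -
  let ?P = "poisson_majorant CARD('n) ((\<rho> + 1)^2) w"
  have inside: "max (\<beta> * ?P v) 0 = \<beta> * ?P v" if "norm v \<le> norm (lat x) + 1" for v
  proof -
    have "norm v ^ 2 \<le> (\<rho> + 1)^2"
      using that assms(3) by (intro power_mono) auto
    then have "0 \<le> ?P v"
      by (rule poisson_majorant_nonneg)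
    with assms(2) show ?thesis
      by simp
  qed
  have "(\<Sum>e\<in>srw_steps. h (x + e)) = (\<Sum>i\<in>UNIV. max (\<beta> * ?P (lat x + axis i 1)) 0 + max (\<beta> * ?P (lat x - axis i 1)) 0)"
    unfolding h_def by (rule sum_srw_steps)
  also have "\<dots> = (\<Sum>i\<in>UNIV. \<beta> * ?P (lat x + axis i 1) + \<beta> * ?P (lat x - axis i 1))"
  proof (rule sum.cong[OF refl])
    fix i
    have "norm (lat x + axis i 1) \<le> norm (lat x) + 1" "norm (lat x - axis i 1) \<le> norm (lat x) + 1"
      using norm_triangle_ineq[of "lat x" "axis i 1"] norm_triangle_ineq4[of "lat x" "axis i 1"] by simp_all
    then show "max (\<beta> * ?P (lat x + axis i 1)) 0 + max (\<beta> * ?P (lat x - axis i 1)) 0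
        = \<beta> * ?P (lat x + axis i 1) + \<beta> * ?P (lat x - axis i 1)"
      by (simp add: inside)
  qed
  also have "\<dots> = \<beta> * (\<Sum>i\<in>UNIV. ?P (lat x + axis i 1) + ?P (lat x - axis i 1))"
    by (simp add: sum_distrib_left distrib_left)
  also have "\<dots> \<le> \<beta> * (2 * CARD('n) * ?P (lat x))"
  proof (intro mult_left_mono poisson_majorant_superharmonic assms(1,2))
    show "norm (lat x) ^ 2 \<le> (\<rho> + 1)^2"
      using assms(3) by (intro power_mono) auto
    show "2 * norm (lat x) \<le> norm w ^ 2 - (\<rho> + 1)^2"
      using assms(3,4) by (simp add: power2_eq_square algebra_simps)
  qed
  also have "\<dots> = card (srw_steps :: (int^'n) set) * h x"
    using inside[of "lat x"] by (simp add: h_def card_srw_steps)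
  finally show ?thesis .
qed

lemma hit_point_entrance_le:
  fixes x e z :: "int^'n"
  assumes "3 \<le> CARD('n)" "1 \<le> t" "e \<in> srw_steps" "t/2 \<le> norm (lat x - lat z)"
  defines "\<alpha> \<equiv> (real CARD('n) - 2) / 2"
  shows "hit_prob {z} B M (x + e) \<le> (17 * majorant_const CARD('n)) powr \<alpha> * (1 + t^2) powr (-\<alpha>)"
proof -
  define u where "u = norm (lat (x + e) - lat z)"
  have "norm (lat x - lat z) \<le> u + norm (lat e)"
    using norm_triangle_ineq4[of "lat (x + e) - lat z" "lat e"] by (simp add: u_def lat_add)
  then have "t/2 - 1 \<le> u"
    using assms(4) norm_lat_srw_step[OF assms(3)] by simp
  have "hit_prob {z} B M (x + e)
      \<le> green_majorant CARD('n) (lat (x + e) - lat z) / green_majorant CARD('n) (0::real^'n)"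
    by (rule hit_point_le_green_majorant[OF assms(1)])
  also have "\<dots> \<le> majorant_const CARD('n) powr \<alpha> * (1 + u^2) powr (-\<alpha>)"
    unfolding u_def \<alpha>_def by (rule green_majorant_ratio_le) (use assms(1) in simp)
  also have "\<dots> \<le> majorant_const CARD('n) powr \<alpha> * (17 powr \<alpha> * (1 + t^2) powr (-\<alpha>))"
    using assms(1,2) \<open>t/2 - 1 \<le> u\<close>
    by (intro mult_left_mono neg_powr_one_plus_square_le) (auto simp: u_def \<alpha>_def)
  also have "\<dots> = (17 * majorant_const CARD('n)) powr \<alpha> * (1 + t^2) powr (-\<alpha>)"
    using majorant_const_ge_3[of "real CARD('n)"] assms(1) by (simp add: powr_mult)
  finally show ?thesis .
qed

lemma norm_radial_extension:
  fixes Z :: "real^'n"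
  assumes "0 < norm Z" "norm Z \<le> \<rho> + 2"
  shows "norm (((\<rho> + 2) / norm Z) *\<^sub>R Z) = \<rho> + 2"
    and "norm (Z - ((\<rho> + 2) / norm Z) *\<^sub>R Z) = \<rho> + 2 - norm Z"
proof -
  let ?c = "(\<rho> + 2) / norm Z"
  have "0 < \<rho> + 2"
    using assms by linarith
  have "1 \<le> ?c"
    using assms by (simp add: le_divide_eq_1_pos)
  have "norm (Z - ?c *\<^sub>R Z) = norm ((1 - ?c) *\<^sub>R Z)"
    by (simp add: algebra_simps)
  also have "\<dots> = (?c - 1) * norm Z"
    using \<open>1 \<le> ?c\<close> by simp
  also have "\<dots> = \<rho> + 2 - norm Z"
    using assms(1) by (simp add: field_simps)
  finally show "norm (Z - ?c *\<^sub>R Z) = \<rho> + 2 - norm Z" .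
  show "norm (?c *\<^sub>R Z) = \<rho> + 2"
    using assms(1) \<open>0 < \<rho> + 2\<close> by simp
qed

lemma entrance_weight_eq:
  fixes A B s t r \<alpha> :: real
  assumes "0 < A" "0 < B" "0 < s" "0 < t" "0 < r"
  shows "A powr \<alpha> * s powr (-\<alpha>)
           = (4 * (A powr \<alpha> * B powr (\<alpha> + 1)) * s / (2 * r * t)) * (r * (t/2) * (B * s) powr (-(\<alpha> + 1)))"
proof -
  have "s powr (-\<alpha>) = s * s powr (-(\<alpha> + 1))"
    using powr_add[of s 1 "-(\<alpha> + 1)"] assms(3) by simp
  moreover have "B powr (\<alpha> + 1) * B powr (-(\<alpha> + 1)) = 1"
    using powr_add[of B "\<alpha> + 1" "-(\<alpha> + 1)"] assms(2) by simp
  ultimately show ?thesis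
    using assms by (simp add: powr_mult field_simps)
qed

lemma origin_weight_le:
  fixes M t r :: real and n :: nat
  assumes "0 \<le> M" "1 \<le> t" "0 < r" "1 \<le> n"
  shows "M * (1 + t^2) / (2 * r * t) * r powr (2 - real n) \<le> M * t / r ^ (n - 1)"
proof -
  have "2 - real n = 1 + - real (n - 1)"
    using assms(4) by (simp add: of_nat_diff)
  then have "r powr (2 - real n) = r powr 1 * r powr (- real (n - 1))"
    by (simp only: powr_add)
  also have "\<dots> = r / r ^ (n - 1)"
    using assms(3) by (simp add: powr_minus_divide powr_realpow)
  finally have "M * (1 + t^2) / (2 * r * t) * r powr (2 - real n) = M * (1 + t^2) / (2 * t) / r ^ (n - 1)"
    using assms(3) by simp
  also have "\<dots> \<le> M * (2 * t * t) / (2 * t) / r ^ (n - 1)"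
  proof (intro divide_right_mono mult_left_mono)
    show "1 + t^2 \<le> 2 * t * t"
      using mult_mono[OF assms(2) assms(2)] assms(2) by (simp add: power2_eq_square)
  qed (use assms in auto)
  also have "\<dots> = M * t / r ^ (n - 1)"
    using assms(2) by simp
  finally show ?thesis .
qed

definition hit_point_const :: "real \<Rightarrow> real" where
  "hit_point_const d = 4 * ((17 * majorant_const d) powr ((d - 2)/2) * (7 + majorant_const d) powr (d/2))"

lemma hit_point_const_nonneg: "0 \<le> hit_point_const d"
  by (simp add: hit_point_const_def)

lemma hit_point_entrance_le_poisson:
  fixes y e z :: "int^'n" and w :: "real^'n"
  assumes d3: "3 \<le> CARD('n)" and t: "1 \<le> t" and "0 < \<rho>" "e \<in> srw_steps"
    and "t/2 \<le> norm (lat y - lat z)" "norm (lat (y + e) - lat z) < t/2"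
    and "norm (lat z) = \<rho> + 1 - t" "norm (lat z - w) = t + 1"
  shows "hit_prob {z} B M (y + e)
           \<le> hit_point_const CARD('n) * (1 + t^2) / (2 * (\<rho> + 1) * t)
              * poisson_majorant CARD('n) ((\<rho> + 1)^2) w (lat (y + e))"
proof -
  define d b \<alpha> where "d = real CARD('n)" and "b = majorant_const d" and "\<alpha> = (d - 2)/2"
  have "3 \<le> b" "d/2 = \<alpha> + 1"
    using majorant_const_ge_3[of d] d3 by (simp_all add: b_def d_def \<alpha>_def field_simps)
  have const: "hit_point_const CARD('n) = 4 * ((17 * b) powr \<alpha> * (7 + b) powr (\<alpha> + 1))"
    unfolding hit_point_const_def \<open>d/2 = \<alpha> + 1\<close>[symmetric] by (simp add: b_def \<alpha>_def d_def)
  have "hit_prob {z} B M (y + e) \<le> (17 * b) powr \<alpha> * (1 + t^2) powr (-\<alpha>)"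
    using hit_point_entrance_le[OF d3 t assms(4,5)] by (simp add: b_def \<alpha>_def d_def)
  also have "\<dots> = hit_point_const CARD('n) * (1 + t^2) / (2 * (\<rho> + 1) * t)
                   * ((\<rho> + 1) * (t/2) * ((7 + b) * (1 + t^2)) powr (-(\<alpha> + 1)))"
    unfolding const
    by (rule entrance_weight_eq) (use \<open>3 \<le> b\<close> t \<open>0 < \<rho>\<close> in \<open>auto intro: add_pos_nonneg\<close>)
  also have "\<dots> \<le> hit_point_const CARD('n) * (1 + t^2) / (2 * (\<rho> + 1) * t)
                   * poisson_majorant CARD('n) ((\<rho> + 1)^2) w (lat (y + e))"
  proof (rule mult_left_mono)
    from poisson_majorant_ge_near[OF _ t assms(6-8)] d3
    show "(\<rho> + 1) * (t/2) * ((7 + b) * (1 + t^2)) powr (-(\<alpha> + 1))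
        \<le> poisson_majorant CARD('n) ((\<rho> + 1)^2) w (lat (y + e))"
      unfolding b_def \<open>d/2 = \<alpha> + 1\<close>[symmetric] by (simp add: d_def)
    show "0 \<le> hit_point_const CARD('n) * (1 + t^2) / (2 * (\<rho> + 1) * t)"
      using hit_point_const_nonneg t \<open>0 < \<rho>\<close> by simp
  qed
  finally show ?thesis .
qed

lemma hit_point_before_exit_le:
  fixes z :: "int^'n"
  assumes d3: "3 \<le> CARD('n)" and "0 < \<rho>" and "norm (lat z) \<le> \<rho>"
    and "\<rho> + 1 - norm (lat z) \<le> 2 * norm (lat z)"
  shows "hit_prob {z} (UNIV - {u. norm (lat u) < \<rho>}) N 0
           \<le> hit_point_const CARD('n) * (\<rho> + 1 - norm (lat z)) / (\<rho> + 1) ^ (CARD('n) - 1)"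
proof -
  define t where "t = \<rho> + 1 - norm (lat z)"
  define w where "w = ((\<rho> + 2) / norm (lat z)) *\<^sub>R lat z"
  define \<beta> where "\<beta> = hit_point_const CARD('n) * (1 + t^2) / (2 * (\<rho> + 1) * t)"
  define h where "h u = max (\<beta> * poisson_majorant CARD('n) ((\<rho> + 1)^2) w (lat u)) 0" for u
  have t: "1 \<le> t" "t \<le> 2 * norm (lat z)"
    using assms by (simp_all add: t_def)
  have "0 < norm (lat z)" "norm (lat z) \<le> \<rho> + 2"
    using t assms(3) by linarith+
  from norm_radial_extension[OF this]
  have w: "norm w = \<rho> + 2" "norm (lat z - w) = t + 1"
    by (simp_all add: w_def t_def)
  have "0 \<le> \<beta>"
    using t assms(2) hit_point_const_nonneg by (simp add: \<beta>_def)
  \<comment> \<open>Before entering the ball of radius t/2 around z the walk is controlled by h; on entering,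
    by the Green-type bound, which h dominates there.\<close>
  have "hit_prob {z} (UNIV - {u. norm (lat u) < \<rho>}) N 0 \<le> h 0"
  proof (rule hit_prob_le_superharmonic[where S = "{y. norm (lat y - lat z) < t/2}"])
    show "0 \<le> h u" for u
      by (simp add: h_def)
    show "(\<Sum>e\<in>srw_steps. h (y + e)) \<le> card (srw_steps :: (int^'n) set) * h y"
      if "y \<notin> UNIV - {u. norm (lat u) < \<rho>}" for y
      unfolding h_def using max_poisson_majorant_superharmonic[OF d3 \<open>0 \<le> \<beta>\<close> _ w(1)] that by simp
    show "hit_prob {z} (UNIV - {u. norm (lat u) < \<rho>}) M (y + e) \<le> h (y + e)"
      if "y \<notin> {y. norm (lat y - lat z) < t/2}" "e \<in> srw_steps" "y + e \<in> {y. norm (lat y - lat z) < t/2}"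
      for y e M
    proof -
      have "hit_prob {z} (UNIV - {u. norm (lat u) < \<rho>}) M (y + e)
          \<le> \<beta> * poisson_majorant CARD('n) ((\<rho> + 1)^2) w (lat (y + e))"
        unfolding \<beta>_def using that
        by (intro hit_point_entrance_le_poisson[OF d3 t(1) assms(2) that(2) _ _ _ w(2)]) (auto simp: t_def)
      then show ?thesis
        by (simp add: h_def)
    qed
  qed (use t in auto)
  also have "h 0 \<le> \<beta> * (\<rho> + 1) powr (2 - real CARD('n))"
  proof -
    have "poisson_majorant CARD('n) ((\<rho> + 1)^2) w 0 \<le> (\<rho> + 1) powr (2 - real CARD('n))"
      using d3 assms(2) w(1) by (intro poisson_majorant_0_le) simp_all
    then show ?thesis
      using mult_left_mono[OF _ \<open>0 \<le> \<beta>\<close>] \<open>0 \<le> \<beta>\<close> by (simp add: h_def)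
  qed
  also have "\<dots> \<le> hit_point_const CARD('n) * t / (\<rho> + 1) ^ (CARD('n) - 1)"
    unfolding \<beta>_def using assms(2) d3 by (intro origin_weight_le[OF hit_point_const_nonneg t(1)]) auto
  finally show ?thesis
    by (simp add: t_def)
qed

section \<open>Counting the lattice points of the cell\<close>

lemma lattice_ball_subset_box:
  "{z::int^'n. norm (lat z - a) \<le> L} \<subseteq> vec_lambda ` (PiE UNIV (\<lambda>i. {\<lceil>a$i - L\<rceil> .. \<lfloor>a$i + L\<rfloor>}))"
proof
  fix z :: "int^'n"
  assume "z \<in> {z. norm (lat z - a) \<le> L}"
  then have comp: "\<bar>real_of_int (z$i) - a$i\<bar> \<le> L" for i
    using component_le_norm_cart[of "lat z - a" i] by (simp add: lat_nth)
  have "z$i \<in> {\<lceil>a$i - L\<rceil> .. \<lfloor>a$i + L\<rfloor>}" for i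
    using comp[of i] by (simp add: ceiling_le_iff le_floor_iff abs_le_iff)
  then have "(\<lambda>i. z$i) \<in> PiE UNIV (\<lambda>i. {\<lceil>a$i - L\<rceil> .. \<lfloor>a$i + L\<rfloor>})"
    by auto
  then show "z \<in> vec_lambda ` (PiE UNIV (\<lambda>i. {\<lceil>a$i - L\<rceil> .. \<lfloor>a$i + L\<rfloor>}))"
    by (metis image_eqI vec_lambda_eta)
qed

lemma card_int_interval_le: "0 \<le> L \<Longrightarrow> real (card {\<lceil>c - L\<rceil> .. \<lfloor>c + L\<rfloor>}) \<le> 2 * L + 1"
  using of_int_floor_le[of "c + L"] le_of_int_ceiling[of "c - L"] by (simp add: nat_le_iff) linarith

lemma finite_card_lattice_ball:
  fixes a :: "real^'n"
  assumes "0 \<le> L"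
  shows "finite {z::int^'n. norm (lat z - a) \<le> L}"
    and "real (card {z::int^'n. norm (lat z - a) \<le> L}) \<le> (2 * L + 1) ^ CARD('n)"
proof -
  let ?I = "\<lambda>i. {\<lceil>a$i - L\<rceil> .. \<lfloor>a$i + L\<rfloor>}"
  have fin: "finite (PiE UNIV ?I)"
    by (intro finite_PiE) auto
  then show "finite {z::int^'n. norm (lat z - a) \<le> L}"
    using lattice_ball_subset_box finite_subset by blast
  have "card {z::int^'n. norm (lat z - a) \<le> L} \<le> card (PiE UNIV ?I)"
    using card_mono[OF finite_imageI[OF fin] lattice_ball_subset_box] card_image_le[OF fin, of vec_lambda]
    by linarith
  also have "\<dots> = (\<Prod>i\<in>UNIV. card (?I i))"
    by (rule card_PiE) simp
  finally have "real (card {z::int^'n. norm (lat z - a) \<le> L}) \<le> (\<Prod>i\<in>UNIV. real (card (?I i)))"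
    by (simp flip: of_nat_prod)
  also have "\<dots> \<le> (\<Prod>i\<in>(UNIV::'n set). 2 * L + 1)"
    using card_int_interval_le[OF assms] by (intro prod_mono) auto
  finally show "real (card {z::int^'n. norm (lat z - a) \<le> L}) \<le> (2 * L + 1) ^ CARD('n)"
    by simp
qed

lemma card_floor_interval_le: "0 \<le> D \<Longrightarrow> real (card {\<lfloor>R\<rfloor> .. \<lfloor>R + D\<rfloor>}) \<le> D + 2"
  using floor_mono[of R "R + D"] of_int_floor_le[of "R + D"] real_of_int_floor_gt_diff_one[of R]
  by (simp add: of_nat_diff) linarith

lemma cone_shell_point_near_ray:
  fixes T :: "(real^'n) set" and u :: "real^'n" and z :: "int^'n"
  assumes "1 \<le> R" "D \<le> R" "u \<in> T" "norm u = 1" and diam: "\<forall>x\<in>T. \<forall>y\<in>T. dist x y \<le> cp / R"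
    and z: "R \<le> norm (lat z)" "norm (lat z) \<le> R + D" "(1 / norm (lat z)) *\<^sub>R lat z \<in> T"
  shows "norm (lat z - of_int \<lfloor>norm (lat z)\<rfloor> *\<^sub>R u) \<le> 2 * cp + 1"
proof -
  define m where "m = \<lfloor>norm (lat z)\<rfloor>"
  have frac: "0 \<le> norm (lat z) - of_int m" "norm (lat z) - of_int m \<le> 1"
    using of_int_floor_le[of "norm (lat z)"] real_of_int_floor_gt_diff_one[of "norm (lat z)"]
    unfolding m_def by linarith+
  have "lat z - of_int m *\<^sub>R u
      = norm (lat z) *\<^sub>R ((1 / norm (lat z)) *\<^sub>R lat z - u) + (norm (lat z) - of_int m) *\<^sub>R u"
    using z(1) assms(1) by (simp add: algebra_simps)
  then have "norm (lat z - of_int m *\<^sub>R u)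
      \<le> norm (lat z) * dist ((1 / norm (lat z)) *\<^sub>R lat z) u + (norm (lat z) - of_int m)"
    using norm_triangle_ineq[of "norm (lat z) *\<^sub>R ((1 / norm (lat z)) *\<^sub>R lat z - u)"
        "(norm (lat z) - of_int m) *\<^sub>R u"] frac(1) \<open>norm u = 1\<close>
    by (simp add: dist_norm)
  also have "\<dots> \<le> (2 * R) * (cp / R) + 1"
    using diam z \<open>u \<in> T\<close> assms(1,2) frac(2) by (intro add_mono mult_mono) auto
  finally show ?thesis
    using assms(1) by (simp add: m_def)
qed

lemma finite_card_subset_UN_le:
  assumes "finite M" "\<And>m. m \<in> M \<Longrightarrow> finite (F m)" "\<And>m. m \<in> M \<Longrightarrow> real (card (F m)) \<le> K"
    and "V \<subseteq> (\<Union>m\<in>M. F m)"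
  shows "finite V" "real (card V) \<le> real (card M) * K"
proof -
  have fin: "finite (\<Union>m\<in>M. F m)"
    using assms(1,2) by simp
  then show "finite V"
    using assms(4) by (rule finite_subset[rotated])
  have "card V \<le> card (\<Union>m\<in>M. F m)"
    using fin assms(4) by (rule card_mono)
  also have "\<dots> \<le> (\<Sum>m\<in>M. card (F m))"
    using assms(1) by (rule card_UN_le)
  finally have "real (card V) \<le> (\<Sum>m\<in>M. real (card (F m)))"
    by (simp flip: of_nat_sum)
  also have "\<dots> \<le> real (card M) * K"
    using sum_mono[of M "\<lambda>m. real (card (F m))" "\<lambda>_. K"] assms(3) by simp
  finally show "real (card V) \<le> real (card M) * K" .
qed

lemma card_cone_shell_le:
  fixes T :: "(real^'n) set"
  assumes "1 \<le> R" "0 \<le> D" "D \<le> R" "0 < cp" and diam: "\<forall>x\<in>T. \<forall>y\<in>T. dist x y \<le> cp / R"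
  defines "V \<equiv> {z::int^'n. R \<le> norm (lat z) \<and> norm (lat z) \<le> R + D \<and> (1 / norm (lat z)) *\<^sub>R lat z \<in> T}"
  shows "finite V" "real (card V) \<le> (D + 2) * (4 * cp + 3) ^ CARD('n)"
proof -
  have "finite V \<and> real (card V) \<le> (D + 2) * (4 * cp + 3) ^ CARD('n)"
  proof (cases "V = {}")
    case True
    then show ?thesis
      using \<open>0 \<le> D\<close> \<open>0 < cp\<close> by simp
  next
    case False
    then obtain z0 where "z0 \<in> V"
      by blast
    define u where "u = (1 / norm (lat z0)) *\<^sub>R lat z0"
    define M where "M = {\<lfloor>R\<rfloor> .. \<lfloor>R + D\<rfloor>}"
    define ball where "ball m = {z::int^'n. norm (lat z - of_int m *\<^sub>R u) \<le> 2 * cp + 1}" for m :: int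
    have "u \<in> T" "norm u = 1"
      using \<open>z0 \<in> V\<close> assms(1) by (auto simp: V_def u_def)
    have "V \<subseteq> (\<Union>m\<in>M. ball m)"
    proof
      fix z assume "z \<in> V"
      then have "z \<in> ball \<lfloor>norm (lat z)\<rfloor>" "\<lfloor>norm (lat z)\<rfloor> \<in> M"
        using cone_shell_point_near_ray[OF assms(1,3) \<open>u \<in> T\<close> \<open>norm u = 1\<close> diam]
        by (auto simp: V_def ball_def M_def floor_mono)
      then show "z \<in> (\<Union>m\<in>M. ball m)"
        by blast
    qed
    moreover have ball: "finite (ball m)" "real (card (ball m)) \<le> (4 * cp + 3) ^ CARD('n)" for m
      using finite_card_lattice_ball[of "2 * cp + 1" "of_int m *\<^sub>R u"] assms(4)
      by (simp_all add: ball_def algebra_simps)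
    moreover have "finite M"
      by (simp add: M_def)
    ultimately have "finite V" "real (card V) \<le> real (card M) * (4 * cp + 3) ^ CARD('n)"
      using finite_card_subset_UN_le[of M ball] by blast+
    moreover have "real (card M) * (4 * cp + 3) ^ CARD('n) \<le> (D + 2) * (4 * cp + 3) ^ CARD('n)"
      using card_floor_interval_le[OF assms(2), of R] assms(4) by (intro mult_right_mono) (auto simp: M_def)
    ultimately show ?thesis
      by simp
  qed
  then show "finite V" "real (card V) \<le> (D + 2) * (4 * cp + 3) ^ CARD('n)"
    by simp_all
qed

lemma srw_hit_cone_shell_le:
  fixes T :: "(real^'n) set"
  assumes "3 \<le> CARD('n)" "1 \<le> R" "0 \<le> D" "D \<le> R" "0 < cp" "\<forall>x\<in>T. \<forall>y\<in>T. dist x y \<le> cp / R"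
  shows "srw_hit_before {z. R \<le> norm (lat z) \<and> norm (lat z) \<le> R + D \<and> (1 / norm (lat z)) *\<^sub>R lat z \<in> T}
             (UNIV - {z. norm (lat z) < R + D})
           \<le> hit_point_const CARD('n) * (4 * cp + 3) ^ CARD('n) * ((D + 2) * (D + 1)) / R ^ (CARD('n) - 1)"
proof (rule srw_hit_before_le)
  fix N
  define V where "V = {z::int^'n. R \<le> norm (lat z) \<and> norm (lat z) \<le> R + D \<and> (1 / norm (lat z)) *\<^sub>R lat z \<in> T}"
  define B where "B = UNIV - {z::int^'n. norm (lat z) < R + D}"
  let ?p = "hit_point_const CARD('n) * (D + 1) / R ^ (CARD('n) - 1)"
  have point: "hit_prob {z} B N 0 \<le> ?p" if "z \<in> V" for z
  proof -
    have z: "R \<le> norm (lat z)" "norm (lat z) \<le> R + D"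
      using that by (simp_all add: V_def)
    have "hit_prob {z} B N 0
        \<le> hit_point_const CARD('n) * (R + D + 1 - norm (lat z)) / (R + D + 1) ^ (CARD('n) - 1)"
      unfolding B_def using z assms(1-4) by (intro hit_point_before_exit_le) auto
    also have "\<dots> \<le> ?p"
      using z assms(2,3) hit_point_const_nonneg
      by (intro frac_le mult_left_mono power_mono) auto
    finally show ?thesis .
  qed
  note V = card_cone_shell_le[OF assms(2-6), folded V_def]
  have "hit_prob V B N 0 \<le> (\<Sum>z\<in>V. hit_prob {z} B N 0)"
    by (rule hit_prob_le_sum_singletons[OF V(1)])
  also have "\<dots> \<le> real (card V) * ?p"
    using sum_mono[of V _ "\<lambda>_. ?p", OF point] by simp
  also have "\<dots> \<le> (D + 2) * (4 * cp + 3) ^ CARD('n) * ?p"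
    using V(2) assms(2,3) hit_point_const_nonneg by (intro mult_right_mono) auto
  also have "\<dots> = hit_point_const CARD('n) * (4 * cp + 3) ^ CARD('n) * ((D + 2) * (D + 1)) / R ^ (CARD('n) - 1)"
    by (simp add: mult_ac)
  finally show "hit_prob V B N 0 \<le> \<dots>" .
qed

lemma shell_width_factor_le:
  fixes \<delta> R :: real
  assumes "1 \<le> ln R" "0 \<le> \<delta>"
  shows "(\<delta> * sqrt (ln R) + 2) * (\<delta> * sqrt (ln R) + 1) \<le> (\<delta> + 2)^2 * ln R"
proof -
  have s: "1 \<le> sqrt (ln R)" "sqrt (ln R) ^ 2 = ln R"
    using assms(1) by simp_all
  have "\<delta> * sqrt (ln R) + 1 \<le> \<delta> * sqrt (ln R) + 2" "\<delta> * sqrt (ln R) + 2 \<le> (\<delta> + 2) * sqrt (ln R)"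
    using s(1) by (simp_all add: algebra_simps)
  then have "(\<delta> * sqrt (ln R) + 2) * (\<delta> * sqrt (ln R) + 1) \<le> ((\<delta> + 2) * sqrt (ln R)) ^ 2"
    using assms(2) s(1) by (simp add: power2_eq_square mult_mono)
  then show ?thesis
    using s(2) by (simp add: power_mult_distrib)
qed

lemma wide_shell_trivial_bound:
  fixes \<delta> R :: real
  assumes "1 < R" "1 \<le> ln R" "0 < \<delta>" "R < \<delta> * sqrt (ln R)"
  shows "1 \<le> \<delta> ^ (2 * n) * ln R / R ^ n"
proof -
  have "sqrt (ln R) \<le> sqrt R"
    using ln_le_minus_one[of R] assms(1) by simp
  then have "\<delta> * sqrt (ln R) \<le> \<delta> * sqrt R"
    using assms(3) by (simp add: mult_left_mono)
  then have "sqrt R * sqrt R < \<delta> * sqrt R"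
    using assms(1,4) by simp
  then have "sqrt R < \<delta>"
    by (rule mult_right_less_imp_less) (use assms(1) in simp)
  then have "R < \<delta>^2"
    using assms(1) power_strict_mono[of "sqrt R" \<delta> 2] by simp
  then have "R ^ n \<le> \<delta> ^ (2 * n)"
    using assms(1) by (simp add: power_mult power_mono)
  then have "1 \<le> \<delta> ^ (2 * n) / R ^ n"
    using assms(1) by simp
  also have "\<dots> \<le> \<delta> ^ (2 * n) * ln R / R ^ n"
    using assms by (simp add: divide_right_mono mult_le_cancel_left1)
  finally show ?thesis .
qed

lemma srw_hit_narrow_cone_shell_le:
  fixes T :: "(real^'n) set"
  assumes "3 \<le> CARD('n)" "1 < \<delta>" "1 < cp" "1 < R" "1 \<le> ln R" "\<delta> * sqrt (ln R) \<le> R"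
    and diam: "\<forall>x\<in>T. \<forall>y\<in>T. dist x y \<le> cp / R"
  shows "srw_hit_before
           {z. R \<le> norm (lat z) \<and> norm (lat z) \<le> R + \<delta> * sqrt (ln R) \<and> (1 / norm (lat z)) *\<^sub>R lat z \<in> T}
           (UNIV - {z. norm (lat z) < R + \<delta> * sqrt (ln R)})
         \<le> hit_point_const CARD('n) * (4 * cp + 3) ^ CARD('n) * ((\<delta> + 2)^2 * ln R) / R ^ (CARD('n) - 1)"
    (is "?p \<le> ?M * _ / ?r")
proof -
  have "?p \<le> ?M * ((\<delta> * sqrt (ln R) + 2) * (\<delta> * sqrt (ln R) + 1)) / ?r"
    by (rule srw_hit_cone_shell_le[OF assms(1) _ _ assms(6) _ diam]) (use assms(2-4) in auto)
  also have "\<dots> \<le> ?M * ((\<delta> + 2)^2 * ln R) / ?r"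
  proof (intro divide_right_mono mult_left_mono)
    show "(\<delta> * sqrt (ln R) + 2) * (\<delta> * sqrt (ln R) + 1) \<le> (\<delta> + 2)^2 * ln R"
      using shell_width_factor_le assms(2,5) by simp
  qed (use hit_point_const_nonneg assms(3,4) in simp_all)
  finally show ?thesis .
qed

lemma srw_hit_cone_shell_log_bound:
  fixes T :: "(real^'n) set"
  assumes "3 \<le> CARD('n)" "1 < \<delta>" "1 < cp" "3 < R" and diam: "\<forall>x\<in>T. \<forall>y\<in>T. dist x y \<le> cp / R"
  defines "C \<equiv> hit_point_const CARD('n) * (4 * cp + 3) ^ CARD('n) * (\<delta> + 2)^2 + \<delta> ^ (2 * (CARD('n) - 1))"
  shows "srw_hit_before
           {z. R \<le> norm (lat z) \<and> norm (lat z) \<le> R + \<delta> * sqrt (ln R) \<and> (1 / norm (lat z)) *\<^sub>R lat z \<in> T}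
           (UNIV - {z. norm (lat z) < R + \<delta> * sqrt (ln R)})
         \<le> C * ln R / R ^ (CARD('n) - 1)"
proof -
  define C1 C2 where "C1 = hit_point_const CARD('n) * (4 * cp + 3) ^ CARD('n) * (\<delta> + 2)^2"
    and "C2 = \<delta> ^ (2 * (CARD('n) - 1))"
  have "1 < R" "1 \<le> ln R"
    using exp_le \<open>3 < R\<close> by (auto simp: ln_ge_iff)
  have "0 \<le> C1" "0 \<le> C2" "0 < R ^ (CARD('n) - 1)"
    using hit_point_const_nonneg \<open>1 < cp\<close> \<open>1 < \<delta>\<close> \<open>1 < R\<close> by (simp_all add: C1_def C2_def)
  then have le_C: "C1 * ln R / R ^ (CARD('n) - 1) \<le> C * ln R / R ^ (CARD('n) - 1)"
      "C2 * ln R / R ^ (CARD('n) - 1) \<le> C * ln R / R ^ (CARD('n) - 1)"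
    using \<open>1 \<le> ln R\<close> by (simp_all add: C_def C1_def C2_def divide_right_mono mult_right_mono)
  consider "\<delta> * sqrt (ln R) \<le> R" | "R < \<delta> * sqrt (ln R)"
    by linarith
  then show ?thesis
  proof cases
    case 1
    from srw_hit_narrow_cone_shell_le[OF assms(1-3) \<open>1 < R\<close> \<open>1 \<le> ln R\<close> 1 diam] le_C(1)
    show ?thesis
      unfolding C1_def by (simp add: mult.assoc)
  next
    case 2
    have "1 \<le> C2 * ln R / R ^ (CARD('n) - 1)"
      unfolding C2_def using wide_shell_trivial_bound[OF \<open>1 < R\<close> \<open>1 \<le> ln R\<close> _ 2] \<open>1 < \<delta>\<close> by simp
    then have "1 \<le> C * ln R / R ^ (CARD('n) - 1)"
      using le_C(2) by linarith
    then show ?thesis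
      by (rule order_trans[OF srw_hit_before_le_1])
  qed
qed

theorem lemma3p7:
  assumes "CARD('n::finite) \<ge> 3"
  shows "\<exists>R1::real. \<forall>\<delta>::real. \<forall>cp::real. \<delta> > 1 \<longrightarrow> cp > 1 \<longrightarrow>
    (\<exists>C'::real. \<forall>R::real. \<forall>T::(real^'n) set.
       R > 1 \<longrightarrow> R > R1 \<longrightarrow> closed T \<longrightarrow> T \<subseteq> sphere 0 1 \<longrightarrow>
       (\<forall>x\<in>T. \<forall>y\<in>T. dist x y \<le> cp / R) \<longrightarrow>
       srw_hit_before
         {z::int^'n. R \<le> norm (lat z) \<and> norm (lat z) \<le> R + \<delta> * sqrt (ln R)
                     \<and> (1 / norm (lat z)) *\<^sub>R lat z \<in> T}
         (UNIV - {z::int^'n. norm (lat z) < R + \<delta> * sqrt (ln R)})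
       \<le> C' * ln R / R ^ (CARD('n) - 1))"
  by (rule exI[of _ 3], intro allI impI exI) (rule srw_hit_cone_shell_log_bound[OF assms]; assumption)

end
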